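(* Let $F$ and $G$ be Fourier matrices of the same size $N$ with indexing groups $I_F,I_G$. (a) $F$ and $G$ are equivalent (i.e. $G=SFT^{-1}$ for some $N\times N$ enphased permutation matrices $S,T$) if and only if they are permutation equivalent (i.e. $G=PFR^{-1}$ for some permutation matrices $P,R$), i.e. if and only if $I_F$ and $I_G$ are isomorphic. (b) If $F$ and $G$ are equivalent, then $$\mathrm{Map}_{\mathcal P}(F,G)=\mathrm{Map}_{\mathcal S}(F,G)\cdot\mathrm{Stab}_{\mathcal Z}(F)=\mathrm{Stab}_{\mathcal Z}(G)\cdot\mathrm{Map}_{\mathcal S}(F,G).$$
   Context: For $n\ge1$, $F_n$ is the $n\times n$ matrix with rows and columns indexed by $\mathbb Z_n$ and entries $e^{2\pi i\,\tilde i\tilde j/n}$. A Fourier matrix is $F=F_{N_1}\otimes\cdots\otimes F_{N_r}$ of size $N=N_1\cdots N_r$, indexed by $I_F=\mathbb Z_{N_1}\times\cdots\times\mathbb Z_{N_r}$ with $F_{i,j}=\prod_x(F_{N_x})_{i_x,j_x}$; group indices correspond to ordinary indices via lexicographic order. An enphased permutation matrix is the product of a permutation matrix and a unitary diagonal matrix. Pairs $(S,T)$ of invertible matrices act on $N\times N$ matrices by $(S,T)X=SXT^{-1}$ and are multiplied componentwise. $\mathrm{Map}_{\mathcal P}(F,G)$ is the set of pairs of enphased permutation matrices mapping $F$ to $G$; $\mathrm{Map}_{\mathcal S}(F,G)$ the set of pairs of permutation matrices mapping $F$ to $G$; $\mathrm{Stab}_{\mathcal Z}(F)$ the set of pairs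 of matrices from $\{DZ_k:\ D\text{ unitary diagonal},\ k\in I_F\}$ mapping $F$ to $F$, where $Z_k$ is the permutation matrix with $(Z_k)_{i,i+k}=1$ for $i\in I_F$. Products of sets of pairs are sets of products. *)

theory Defs
  imports "Jordan_Normal_Form.Matrix" "HOL-Algebra.Group" "HOL-Combinatorics.Permutations"
begin

text \<open>A Fourier matrix F = F_{N_1} (x) ... (x) F_{N_r} is described by the list Ns = [N_1,...,N_r].\<close>

definition idx_set :: "nat list \<Rightarrow> nat list set" where
  "idx_set Ns = {xs. length xs = length Ns \<and> (\<forall>x<length Ns. xs ! x < Ns ! x)}"

definition idx_add :: "nat list \<Rightarrow> nat list \<Rightarrow> nat list \<Rightarrow> nat list" where
  "idx_add Ns a b = map (\<lambda>x. (a ! x + b ! x) mod (Ns ! x)) [0..<length Ns]"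

definition idx_group :: "nat list \<Rightarrow> nat list monoid" where
  "idx_group Ns = \<lparr>carrier = idx_set Ns, mult = idx_add Ns, one = replicate (length Ns) 0\<rparr>"

text \<open>Correspondence between ordinary indices 0..N-1 and group indices via lexicographic order
(first coordinate most significant).\<close>

fun to_idx :: "nat list \<Rightarrow> nat \<Rightarrow> nat list" where
  "to_idx [] k = []"
| "to_idx (n # ns) k = (k div prod_list ns) # to_idx ns (k mod prod_list ns)"

definition fourier :: "nat list \<Rightarrow> complex mat" where
  "fourier Ns = mat (prod_list Ns) (prod_list Ns)
     (\<lambda>(i, j). \<Prod>x<length Ns. exp (2 * of_real pi * \<i> * of_nat (to_idx Ns i ! x)
                                      * of_nat (to_idx Ns j ! x) / of_nat (Ns ! x)))"

definition perm_mat :: "nat \<Rightarrow> (nat \<Rightarrow> nat) \<Rightarrow> complex mat" where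
  "perm_mat n \<sigma> = mat n n (\<lambda>(i, j). if \<sigma> j = i then 1 else 0)"

definition perm_mats :: "nat \<Rightarrow> complex mat set" where
  "perm_mats n = {perm_mat n \<sigma> | \<sigma>. \<sigma> permutes {..<n}}"

definition unit_diag_mats :: "nat \<Rightarrow> complex mat set" where
  "unit_diag_mats n = {mat_diag n d | d. \<forall>i<n. cmod (d i) = 1}"

definition enphased_perm_mats :: "nat \<Rightarrow> complex mat set" where
  "enphased_perm_mats n = {P * D | P D. P \<in> perm_mats n \<and> D \<in> unit_diag_mats n}"

definition mat_inv :: "complex mat \<Rightarrow> complex mat" where
  "mat_inv T = (SOME B. inverts_mat T B \<and> inverts_mat B T)"

definition pair_act :: "complex mat \<Rightarrow> complex mat \<Rightarrow> complex mat \<Rightarrow> complex mat" where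
  "pair_act S T X = S * X * mat_inv T"

definition pair_set_prod ::
    "(complex mat \<times> complex mat) set \<Rightarrow> (complex mat \<times> complex mat) set \<Rightarrow> (complex mat \<times> complex mat) set" where
  "pair_set_prod A B = {(S1 * S2, T1 * T2) | S1 T1 S2 T2. (S1, T1) \<in> A \<and> (S2, T2) \<in> B}"

definition Map_P :: "nat \<Rightarrow> complex mat \<Rightarrow> complex mat \<Rightarrow> (complex mat \<times> complex mat) set" where
  "Map_P n F G = {(S, T). S \<in> enphased_perm_mats n \<and> T \<in> enphased_perm_mats n \<and> pair_act S T F = G}"

definition Map_S :: "nat \<Rightarrow> complex mat \<Rightarrow> complex mat \<Rightarrow> (complex mat \<times> complex mat) set" where
  "Map_S n F G = {(S, T). S \<in> perm_mats n \<and> T \<in> perm_mats n \<and> pair_act S T F = G}"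

definition shift_mat :: "nat list \<Rightarrow> nat list \<Rightarrow> complex mat" where
  "shift_mat Ns k = mat (prod_list Ns) (prod_list Ns)
     (\<lambda>(a, b). if to_idx Ns b = idx_add Ns (to_idx Ns a) k then 1 else 0)"

definition DZ_mats :: "nat list \<Rightarrow> complex mat set" where
  "DZ_mats Ns = {D * shift_mat Ns k | D k. D \<in> unit_diag_mats (prod_list Ns) \<and> k \<in> idx_set Ns}"

definition Stab_Z :: "nat list \<Rightarrow> (complex mat \<times> complex mat) set" where
  "Stab_Z Ns = {(S, T). S \<in> DZ_mats Ns \<and> T \<in> DZ_mats Ns \<and> pair_act S T (fourier Ns) = fourier Ns}"

end

theory Submission
  imports Defs "HOL-Analysis.Complex_Transcendental"
begin

text \<open>The entries of \<open>F\<close> are the values of the nondegenerate pairing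
  \<open>\<langle>x, y\<rangle> = \<Prod>\<^sub>k exp (2\<pi>i x\<^sub>k y\<^sub>k / N\<^sub>k)\<close> on \<open>I\<^sub>F\<close>. A permutation equivalence \<open>G(\<sigma> a, \<tau> j) = F(a, j)\<close> is,
  on group indices, a pair of bijections \<open>I\<^sub>F \<rightarrow> I\<^sub>G\<close> preserving the pairings; nondegeneracy forces the
  row bijection to be an isomorphism. Conversely, an isomorphism together with its dual (every
  character is a pairing) gives a permutation equivalence.

  For an enphased equivalence \<open>S = P\<^sub>\<sigma> D\<close>, \<open>T = P\<^sub>\<tau> E\<close>, the first row and column of \<open>G\<close> consist of ones.
  Comparing an entry with the row \<open>a0 = \<sigma>\<^sup>-\<^sup>1 0\<close> and the column \<open>j0 = \<tau>\<^sup>-\<^sup>1 0\<close> eliminates the phases and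
  shows that \<open>\<sigma> \<circ> t\<^sub>a\<^sub>0\<close>, \<open>\<tau> \<circ> t\<^sub>j\<^sub>0\<close> (with \<open>t\<close> the translations of \<open>I\<^sub>F\<close>) is already a permutation equivalence.
  What remains of \<open>(S, T)\<close> is a pair \<open>(D Z\<^sub>k, D' Z\<^sub>l)\<close> fixing \<open>F\<close>. As the row permutation of a permutation
  equivalence conjugates translations of \<open>I\<^sub>F\<close> into translations of \<open>I\<^sub>G\<close>, this factor can equally be
  moved to the left, where it fixes \<open>G\<close>.\<close>

section \<open>Roots of unity\<close>

definition unit_root :: "nat \<Rightarrow> nat \<Rightarrow> complex" where
  "unit_root n j = exp (2 * of_real pi * \<i> * of_nat j / of_nat n)"

lemma unit_root_add: "unit_root n (a + b) = unit_root n a * unit_root n b"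
  unfolding unit_root_def by (simp add: add_divide_distrib distrib_left exp_add)

lemma unit_root_mod: "n \<ge> 1 \<Longrightarrow> unit_root n (j mod n) = unit_root n j"
  unfolding unit_root_def using complex_root_unity_eq[of n "j mod n" j] by simp

lemma unit_root_mult_mod: "n \<ge> 1 \<Longrightarrow> unit_root n (a * (b mod n)) = unit_root n (a * b)"
  by (metis unit_root_mod mod_mult_right_eq)

lemma unit_root_inj: "n \<ge> 1 \<Longrightarrow> a < n \<Longrightarrow> b < n \<Longrightarrow> unit_root n a = unit_root n b \<Longrightarrow> a = b"
  unfolding unit_root_def using complex_root_unity_eq[of n a b] by simp

lemma unit_root_power: "unit_root n a ^ k = unit_root n (a * k)"
proof -
  have "unit_root n (a * k) = exp (of_nat k * (2 * of_real pi * \<i> * of_nat a / of_nat n))"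
    unfolding unit_root_def by (simp add: algebra_simps)
  also have "\<dots> = unit_root n a ^ k" unfolding unit_root_def by (rule exp_of_nat_mult)
  finally show ?thesis by simp
qed

lemma unit_root_nonzero: "unit_root n a \<noteq> 0"
  unfolding unit_root_def by simp

lemma unit_root_0 [simp]: "unit_root n 0 = 1"
  unfolding unit_root_def by simp

lemma root_of_unity_eq_unit_root: "n \<ge> 1 \<Longrightarrow> z ^ n = 1 \<Longrightarrow> \<exists>j<n. z = unit_root n j"
  using complex_roots_unity[of n] unfolding unit_root_def by auto

section \<open>The index group and its pairing\<close>

definition pos_moduli :: "nat list \<Rightarrow> bool" where
  "pos_moduli Ns \<longleftrightarrow> (\<forall>n\<in>set Ns. n \<ge> 1)"

lemma pos_moduliD: "pos_moduli Ns \<Longrightarrow> x < length Ns \<Longrightarrow> Ns ! x \<ge> 1"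
  unfolding pos_moduli_def by auto

lemma pos_moduli_Cons [simp]: "pos_moduli (n # ns) \<longleftrightarrow> n \<ge> 1 \<and> pos_moduli ns"
  unfolding pos_moduli_def by simp

lemma idx_add_length [simp]: "length (idx_add Ns a b) = length Ns"
  unfolding idx_add_def by simp

lemma idx_add_nth [simp]: "x < length Ns \<Longrightarrow> idx_add Ns a b ! x = (a ! x + b ! x) mod Ns ! x"
  unfolding idx_add_def by simp

lemma idx_add_closed: "pos_moduli Ns \<Longrightarrow> idx_add Ns a b \<in> idx_set Ns"
  unfolding idx_set_def using pos_moduliD by fastforce

lemma idx_zero_closed: "pos_moduli Ns \<Longrightarrow> replicate (length Ns) 0 \<in> idx_set Ns"
  unfolding idx_set_def using pos_moduliD by fastforce

lemma idx_add_zero_zero: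
  "idx_add Ns (replicate (length Ns) 0) (replicate (length Ns) 0) = replicate (length Ns) 0"
  by (auto intro!: nth_equalityI)

lemma mod_add_right_cancel_less:
  fixes x y k n :: nat
  assumes "x < n" "y < n" "(x + k) mod n = (y + k) mod n"
  shows "x = y"
proof -
  have *: "a = b" if "b \<le> a" "a < n" "(a + k) mod n = (b + k) mod n" for a b
  proof -
    have "n dvd a - b" using mod_eq_dvd_iff_nat[of "b + k" "a + k" n] that by simp
    then show ?thesis using that(1,2) nat_dvd_not_less[of "a - b" n] by fastforce
  qed
  show ?thesis using *[of x y] *[of y x] assms by linarith
qed

lemma idx_add_right_cancel:
  assumes "x \<in> idx_set Ns" "y \<in> idx_set Ns" "idx_add Ns x k = idx_add Ns y k"
  shows "x = y"
proof (rule nth_equalityI)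
  show "length x = length y" using assms(1,2) unfolding idx_set_def by simp
  fix i assume "i < length x"
  then have i: "i < length Ns" using assms(1) unfolding idx_set_def by simp
  then have "(x ! i + k ! i) mod Ns ! i = (y ! i + k ! i) mod Ns ! i"
    using arg_cong[OF assms(3), of "\<lambda>z. z ! i"] by simp
  then show "x ! i = y ! i" using mod_add_right_cancel_less assms(1,2) i unfolding idx_set_def by blast
qed

definition idx_pairing :: "nat list \<Rightarrow> nat list \<Rightarrow> nat list \<Rightarrow> complex" where
  "idx_pairing Ns a b = (\<Prod>x<length Ns. unit_root (Ns ! x) (a ! x * b ! x))"

lemma idx_pairing_commute: "idx_pairing Ns a b = idx_pairing Ns b a"
  unfolding idx_pairing_def by (simp add: mult.commute)

lemma idx_pairing_nonzero: "idx_pairing Ns a b \<noteq> 0"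
  unfolding idx_pairing_def by (simp add: unit_root_nonzero)

lemma idx_pairing_zero_left: "idx_pairing Ns (replicate (length Ns) 0) b = 1"
  unfolding idx_pairing_def by simp

lemma idx_pairing_add_right:
  assumes "pos_moduli Ns"
  shows "idx_pairing Ns a (idx_add Ns b c) = idx_pairing Ns a b * idx_pairing Ns a c"
  unfolding idx_pairing_def prod.distrib[symmetric]
proof (rule prod.cong[OF refl])
  fix x assume "x \<in> {..<length Ns}"
  then have x: "x < length Ns" by simp
  have "unit_root (Ns ! x) (a ! x * idx_add Ns b c ! x)
      = unit_root (Ns ! x) (a ! x * (b ! x + c ! x))"
    using x unit_root_mult_mod pos_moduliD[OF assms x] by simp
  then show "unit_root (Ns ! x) (a ! x * idx_add Ns b c ! x)
      = unit_root (Ns ! x) (a ! x * b ! x) * unit_root (Ns ! x) (a ! x * c ! x)"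
    by (simp add: distrib_left unit_root_add)
qed

lemma idx_pairing_add_left:
  "pos_moduli Ns \<Longrightarrow> idx_pairing Ns (idx_add Ns b c) a = idx_pairing Ns b a * idx_pairing Ns c a"
  using idx_pairing_add_right idx_pairing_commute by metis

definition idx_single :: "nat list \<Rightarrow> nat \<Rightarrow> nat \<Rightarrow> nat list" where
  "idx_single Ns x k = map (\<lambda>y. if y = x then k mod (Ns ! y) else 0) [0..<length Ns]"

lemma idx_single_closed: "pos_moduli Ns \<Longrightarrow> idx_single Ns x k \<in> idx_set Ns"
  unfolding idx_set_def idx_single_def using pos_moduliD by fastforce

lemma idx_single_Suc: "idx_add Ns (idx_single Ns x k) (idx_single Ns x 1) = idx_single Ns x (Suc k)"
  unfolding idx_single_def idx_add_def
  by (auto intro!: nth_equalityI simp: mod_add_eq mod_Suc_eq)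

lemma idx_single_0: "idx_single Ns x 0 = replicate (length Ns) 0"
  unfolding idx_single_def by (auto intro!: nth_equalityI)

lemma idx_single_modulus: "x < length Ns \<Longrightarrow> idx_single Ns x (Ns ! x) = replicate (length Ns) 0"
  unfolding idx_single_def by (auto intro!: nth_equalityI)

lemma idx_pairing_single:
  assumes "pos_moduli Ns" "x < length Ns"
  shows "idx_pairing Ns (idx_single Ns x 1) a = unit_root (Ns ! x) (a ! x)"
proof -
  have "idx_pairing Ns (idx_single Ns x 1) a
      = (\<Prod>y<length Ns. if y = x then unit_root (Ns ! x) (a ! x) else 1)"
    unfolding idx_pairing_def
    using unit_root_mult_mod[of "Ns ! x" "a ! x" 1] pos_moduliD[OF assms]
    by (intro prod.cong) (auto simp: idx_single_def mult.commute)
  also have "\<dots> = unit_root (Ns ! x) (a ! x)" using assms(2) by simp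
  finally show ?thesis .
qed

lemma idx_pairing_nondegenerate:
  assumes "pos_moduli Ns" "a \<in> idx_set Ns" "a' \<in> idx_set Ns"
    and "\<And>z. z \<in> idx_set Ns \<Longrightarrow> idx_pairing Ns a z = idx_pairing Ns a' z"
  shows "a = a'"
proof (rule nth_equalityI)
  show "length a = length a'" using assms(2,3) unfolding idx_set_def by simp
  fix x assume "x < length a"
  then have x: "x < length Ns" using assms(2) unfolding idx_set_def by simp
  have "unit_root (Ns ! x) (a ! x) = unit_root (Ns ! x) (a' ! x)"
    using assms(4)[OF idx_single_closed[OF assms(1)]] idx_pairing_single[OF assms(1) x]
    by (metis idx_pairing_commute)
  then show "a ! x = a' ! x"
    using unit_root_inj pos_moduliD[OF assms(1) x] assms(2,3) x unfolding idx_set_def by blast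
qed

definition idx_prefix :: "nat list \<Rightarrow> nat list \<Rightarrow> nat \<Rightarrow> nat list" where
  "idx_prefix Ns z k = map (\<lambda>y. if y < k then z ! y else 0) [0..<length Ns]"

lemma idx_prefix_closed: "pos_moduli Ns \<Longrightarrow> z \<in> idx_set Ns \<Longrightarrow> idx_prefix Ns z k \<in> idx_set Ns"
  unfolding idx_set_def idx_prefix_def using pos_moduliD by fastforce

lemma idx_prefix_0: "idx_prefix Ns z 0 = replicate (length Ns) 0"
  unfolding idx_prefix_def by (auto intro!: nth_equalityI)

lemma idx_prefix_length: "z \<in> idx_set Ns \<Longrightarrow> idx_prefix Ns z (length Ns) = z"
  unfolding idx_prefix_def idx_set_def by (auto intro!: nth_equalityI)

lemma idx_prefix_Suc:
  assumes "z \<in> idx_set Ns" "k < length Ns"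
  shows "idx_prefix Ns z (Suc k) = idx_add Ns (idx_prefix Ns z k) (idx_single Ns k (z ! k))"
proof (rule nth_equalityI)
  fix y assume "y < length (idx_prefix Ns z (Suc k))"
  then have y: "y < length Ns" unfolding idx_prefix_def by simp
  have "z ! y < Ns ! y" using assms(1) y unfolding idx_set_def by simp
  then show "idx_prefix Ns z (Suc k) ! y = idx_add Ns (idx_prefix Ns z k) (idx_single Ns k (z ! k)) ! y"
    using y assms(2) unfolding idx_prefix_def idx_single_def by (cases "y < k"; cases "y = k"; simp)
qed (simp add: idx_prefix_def)

context
  fixes Ns :: "nat list" and c :: "nat list \<Rightarrow> complex"
  assumes pos: "pos_moduli Ns"
    and hom: "\<And>z z'. z \<in> idx_set Ns \<Longrightarrow> z' \<in> idx_set Ns \<Longrightarrow> c (idx_add Ns z z') = c z * c z'"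
    and nz: "\<And>z. z \<in> idx_set Ns \<Longrightarrow> c z \<noteq> 0"
begin

lemma idx_character_zero: "c (replicate (length Ns) 0) = 1"
proof -
  have zero: "replicate (length Ns) 0 \<in> idx_set Ns" by (rule idx_zero_closed[OF pos])
  have "c (replicate (length Ns) 0) = c (replicate (length Ns) 0) * c (replicate (length Ns) 0)"
    using hom[OF zero zero] idx_add_zero_zero[of Ns] by metis
  then show ?thesis using nz[OF zero] by simp
qed

lemma idx_character_single: "c (idx_single Ns x k) = c (idx_single Ns x 1) ^ k"
proof (induction k)
  case 0 then show ?case using idx_character_zero idx_single_0[of Ns x] by simp
next
  case (Suc k)
  then show ?case
    using idx_single_Suc[of Ns x k] hom[OF idx_single_closed[OF pos] idx_single_closed[OF pos]]
    by (metis power_Suc2)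
qed

lemma idx_character_prefix:
  assumes z: "z \<in> idx_set Ns"
  shows "k \<le> length Ns \<Longrightarrow> c (idx_prefix Ns z k) = (\<Prod>y<k. c (idx_single Ns y 1) ^ (z ! y))"
proof (induction k)
  case 0 then show ?case using idx_character_zero idx_prefix_0[of Ns z] by simp
next
  case (Suc k)
  then have k: "k < length Ns" by simp
  have "c (idx_prefix Ns z (Suc k)) = c (idx_prefix Ns z k) * c (idx_single Ns k (z ! k))"
    using idx_prefix_Suc[OF z k] hom idx_prefix_closed[OF pos z] idx_single_closed[OF pos] by metis
  then show ?case using Suc idx_character_single[of k "z ! k"] by simp
qed

text \<open>The generators \<open>idx_single Ns x 1\<close> are mapped to \<open>N\<^sub>x\<close>-th roots of unity, and \<open>idx_prefix\<close>
  builds every element from them coordinate by coordinate.\<close>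

lemma idx_character_eq_pairing:
  obtains w where "w \<in> idx_set Ns" "\<And>z. z \<in> idx_set Ns \<Longrightarrow> c z = idx_pairing Ns z w"
proof -
  have "\<exists>j<Ns ! x. c (idx_single Ns x 1) = unit_root (Ns ! x) j" if x: "x < length Ns" for x
  proof (rule root_of_unity_eq_unit_root)
    show "Ns ! x \<ge> 1" using pos_moduliD[OF pos x] .
    show "c (idx_single Ns x 1) ^ (Ns ! x) = 1"
      using idx_character_single[of x "Ns ! x"] idx_single_modulus[OF x] idx_character_zero by simp
  qed
  then obtain f where f: "\<And>x. x < length Ns \<Longrightarrow> f x < Ns ! x \<and> c (idx_single Ns x 1) = unit_root (Ns ! x) (f x)"
    by metis
  define w where "w = map f [0..<length Ns]"
  show ?thesis
  proof
    show "w \<in> idx_set Ns" unfolding w_def idx_set_def using f by simp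
    fix z assume z: "z \<in> idx_set Ns"
    have "c z = (\<Prod>y<length Ns. c (idx_single Ns y 1) ^ (z ! y))"
      using idx_character_prefix[OF z, of "length Ns"] idx_prefix_length[OF z] by simp
    also have "\<dots> = idx_pairing Ns z w"
      unfolding idx_pairing_def w_def
      using f by (intro prod.cong) (simp_all add: unit_root_power mult.commute)
    finally show "c z = idx_pairing Ns z w" .
  qed
qed

end

section \<open>Lexicographic indices and the Fourier matrix\<close>

lemma idx_set_Nil: "idx_set [] = {[]}"
  unfolding idx_set_def by auto

lemma idx_set_Cons: "xs \<in> idx_set (n # ns) \<longleftrightarrow> (\<exists>a ys. xs = a # ys \<and> a < n \<and> ys \<in> idx_set ns)"
  unfolding idx_set_def by (cases xs) (auto simp: nth_Cons' less_Suc_eq_0_disj)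

lemma prod_list_ge_1: "pos_moduli Ns \<Longrightarrow> prod_list Ns \<ge> 1"
  by (induction Ns) auto

lemma to_idx_in_idx_set: "pos_moduli Ns \<Longrightarrow> k < prod_list Ns \<Longrightarrow> to_idx Ns k \<in> idx_set Ns"
proof (induction Ns arbitrary: k)
  case (Cons n ns)
  then have "prod_list ns \<ge> 1" "k div prod_list ns < n"
    using prod_list_ge_1 by (auto simp: less_mult_imp_div_less)
  with Cons show ?case by (simp add: idx_set_Cons)
qed (simp add: idx_set_Nil)

lemma inj_on_to_idx: "pos_moduli Ns \<Longrightarrow> inj_on (to_idx Ns) {..<prod_list Ns}"
proof (induction Ns)
  case (Cons n ns)
  then have P: "prod_list ns \<ge> 1" and IH: "inj_on (to_idx ns) {..<prod_list ns}"
    using prod_list_ge_1 by auto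
  show ?case
  proof (rule inj_onI)
    fix k k' assume "to_idx (n # ns) k = to_idx (n # ns) k'"
    then have "k div prod_list ns = k' div prod_list ns"
      and "to_idx ns (k mod prod_list ns) = to_idx ns (k' mod prod_list ns)" by auto
    moreover from this(2) have "k mod prod_list ns = k' mod prod_list ns"
      using inj_onD[OF IH] P by simp
    ultimately show "k = k'" by (metis div_mult_mod_eq)
  qed
qed (simp add: lessThan_Suc)

lemma to_idx_surj:
  "pos_moduli Ns \<Longrightarrow> xs \<in> idx_set Ns \<Longrightarrow> \<exists>k<prod_list Ns. to_idx Ns k = xs"
proof (induction Ns arbitrary: xs)
  case (Cons n ns)
  obtain a ys where xs: "xs = a # ys" "a < n" "ys \<in> idx_set ns"
    using Cons.prems(2) idx_set_Cons by blast
  obtain k' where k': "k' < prod_list ns" "to_idx ns k' = ys" using Cons xs by auto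
  define k where "k = a * prod_list ns + k'"
  have "k < (a + 1) * prod_list ns" unfolding k_def using k' by simp
  also have "\<dots> \<le> n * prod_list ns" using xs(2) by (intro mult_right_mono) auto
  finally have "k < prod_list (n # ns)" by simp
  moreover have "k div prod_list ns = a" "k mod prod_list ns = k'" unfolding k_def using k' by auto
  ultimately show ?case using xs k' by (intro exI[of _ k]) auto
qed (simp add: idx_set_Nil)

lemma bij_betw_to_idx: "pos_moduli Ns \<Longrightarrow> bij_betw (to_idx Ns) {..<prod_list Ns} (idx_set Ns)"
  unfolding bij_betw_def using inj_on_to_idx to_idx_in_idx_set to_idx_surj by fastforce

lemma finite_idx_set: "pos_moduli Ns \<Longrightarrow> finite (idx_set Ns)"
  using bij_betw_finite bij_betw_to_idx by blast

lemma to_idx_0: "to_idx Ns 0 = replicate (length Ns) 0"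
  by (induction Ns) auto

lemma fourier_carrier [simp]: "fourier Ns \<in> carrier_mat (prod_list Ns) (prod_list Ns)"
  unfolding fourier_def by simp

lemma fourier_index: "i < prod_list Ns \<Longrightarrow> j < prod_list Ns \<Longrightarrow>
    fourier Ns $$ (i, j) = idx_pairing Ns (to_idx Ns i) (to_idx Ns j)"
  unfolding fourier_def idx_pairing_def unit_root_def by (simp add: mult.assoc)

lemma fourier_symmetric: "i < prod_list Ns \<Longrightarrow> j < prod_list Ns \<Longrightarrow> fourier Ns $$ (i, j) = fourier Ns $$ (j, i)"
  by (simp add: fourier_index idx_pairing_commute)

lemma fourier_nonzero: "i < prod_list Ns \<Longrightarrow> j < prod_list Ns \<Longrightarrow> fourier Ns $$ (i, j) \<noteq> 0"
  by (simp add: fourier_index idx_pairing_nonzero)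

lemma fourier_first_row: "k < prod_list Ns \<Longrightarrow> fourier Ns $$ (0, k) = 1"
  using prod_list_ge_1 by (simp add: fourier_index to_idx_0 idx_pairing_zero_left)

lemma fourier_first_col: "k < prod_list Ns \<Longrightarrow> fourier Ns $$ (k, 0) = 1"
  using prod_list_ge_1 by (simp add: fourier_index to_idx_0 idx_pairing_commute[of _ _ "replicate _ 0"] idx_pairing_zero_left)

section \<open>Pairing-preserving bijections of index groups\<close>

lemma pairing_preserving_bij_imp_iso:
  assumes posN: "pos_moduli Ns" and posM: "pos_moduli Ms"
    and f: "bij_betw f (idx_set Ns) (idx_set Ms)" and g: "bij_betw g (idx_set Ns) (idx_set Ms)"
    and pres: "\<And>x y. x \<in> idx_set Ns \<Longrightarrow> y \<in> idx_set Ns \<Longrightarrow>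
                 idx_pairing Ms (f x) (g y) = idx_pairing Ns x y"
  shows "f \<in> iso (idx_group Ns) (idx_group Ms)"
proof -
  have f_in: "f x \<in> idx_set Ms" if "x \<in> idx_set Ns" for x using bij_betw_apply[OF f that] .
  have "f (idx_add Ns x y) = idx_add Ms (f x) (f y)" if x: "x \<in> idx_set Ns" and y: "y \<in> idx_set Ns" for x y
  proof (rule idx_pairing_nondegenerate[OF posM f_in[OF idx_add_closed[OF posN]] idx_add_closed[OF posM]])
    fix z assume "z \<in> idx_set Ms"
    then obtain u where u: "u \<in> idx_set Ns" "z = g u" using g by (auto simp: bij_betw_def)
    have "idx_pairing Ms (f (idx_add Ns x y)) (g u) = idx_pairing Ns (idx_add Ns x y) u"
      by (rule pres[OF idx_add_closed[OF posN] u(1)])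
    also have "\<dots> = idx_pairing Ns x u * idx_pairing Ns y u" by (rule idx_pairing_add_left[OF posN])
    also have "\<dots> = idx_pairing Ms (f x) (g u) * idx_pairing Ms (f y) (g u)" using pres x y u by simp
    also have "\<dots> = idx_pairing Ms (idx_add Ms (f x) (f y)) (g u)"
      by (rule idx_pairing_add_left[OF posM, symmetric])
    finally show "idx_pairing Ms (f (idx_add Ns x y)) z = idx_pairing Ms (idx_add Ms (f x) (f y)) z"
      using u by simp
  qed
  then show ?thesis using f f_in unfolding iso_def hom_def idx_group_def by auto
qed

lemma iso_inv_into_idx_add:
  assumes pos: "pos_moduli Ns" and h: "h \<in> iso (idx_group Ns) (idx_group Ms)"
    and z: "z \<in> idx_set Ms" and z': "z' \<in> idx_set Ms"
  shows "inv_into (idx_set Ns) h (idx_add Ms z z')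
       = idx_add Ns (inv_into (idx_set Ns) h z) (inv_into (idx_set Ns) h z')"
proof -
  have hb: "bij_betw h (idx_set Ns) (idx_set Ms)"
    and hh: "\<And>x y. x \<in> idx_set Ns \<Longrightarrow> y \<in> idx_set Ns \<Longrightarrow> h (idx_add Ns x y) = idx_add Ms (h x) (h y)"
    using h unfolding iso_def hom_def idx_group_def by auto
  let ?x = "inv_into (idx_set Ns) h z" and ?x' = "inv_into (idx_set Ns) h z'"
  have "?x \<in> idx_set Ns" "?x' \<in> idx_set Ns" "h ?x = z" "h ?x' = z'"
    using hb z z' by (meson bij_betw_apply bij_betw_inv_into bij_betw_inv_into_right)+
  then have "h (idx_add Ns ?x ?x') = idx_add Ms z z'" using hh by simp
  then show ?thesis
    using bij_betw_inv_into_left[OF hb idx_add_closed[OF pos]] by metis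
qed

text \<open>For fixed \<open>y\<close>, the character \<open>z \<mapsto> \<langle>h\<^sup>-\<^sup>1 z, y\<rangle>\<close> of the target group is represented by \<open>\<psi> y\<close>.\<close>

lemma iso_imp_pairing_dual:
  assumes posN: "pos_moduli Ns" and posM: "pos_moduli Ms"
    and h: "h \<in> iso (idx_group Ns) (idx_group Ms)"
  obtains \<psi> where "bij_betw \<psi> (idx_set Ns) (idx_set Ms)"
    "\<And>x y. x \<in> idx_set Ns \<Longrightarrow> y \<in> idx_set Ns \<Longrightarrow> idx_pairing Ms (h x) (\<psi> y) = idx_pairing Ns x y"
proof -
  have hb: "bij_betw h (idx_set Ns) (idx_set Ms)" using h unfolding iso_def idx_group_def by simp
  define hi where "hi = inv_into (idx_set Ns) h"
  have hi_h: "hi (h x) = x" if "x \<in> idx_set Ns" for x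
    using hb that unfolding hi_def by (simp add: bij_betw_inv_into_left)
  have "\<exists>w. w \<in> idx_set Ms \<and> (\<forall>x\<in>idx_set Ns. idx_pairing Ms (h x) w = idx_pairing Ns x y)" for y
  proof -
    obtain w where w: "w \<in> idx_set Ms"
      "\<And>z. z \<in> idx_set Ms \<Longrightarrow> idx_pairing Ns (hi z) y = idx_pairing Ms z w"
      by (rule idx_character_eq_pairing[OF posM, where c = "\<lambda>z. idx_pairing Ns (hi z) y"])
        (simp_all add: hi_def iso_inv_into_idx_add[OF posN h] idx_pairing_add_left[OF posN] idx_pairing_nonzero)
    then show ?thesis using hi_h bij_betw_apply[OF hb] by metis
  qed
  then obtain \<psi> where \<psi>: "\<And>y. \<psi> y \<in> idx_set Ms"
    "\<And>x y. x \<in> idx_set Ns \<Longrightarrow> idx_pairing Ms (h x) (\<psi> y) = idx_pairing Ns x y"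
    by metis
  have inj: "inj_on \<psi> (idx_set Ns)"
  proof (rule inj_onI)
    fix y y' assume y: "y \<in> idx_set Ns" and y': "y' \<in> idx_set Ns" and "\<psi> y = \<psi> y'"
    then have "idx_pairing Ns y x = idx_pairing Ns y' x" if "x \<in> idx_set Ns" for x
      using \<psi>(2)[OF that] by (metis idx_pairing_commute)
    then show "y = y'" by (rule idx_pairing_nondegenerate[OF posN y y'])
  qed
  have "\<psi> ` idx_set Ns = idx_set Ms"
  proof (rule card_subset_eq)
    show "finite (idx_set Ms)" by (rule finite_idx_set[OF posM])
    show "\<psi> ` idx_set Ns \<subseteq> idx_set Ms" using \<psi>(1) by blast
    show "card (\<psi> ` idx_set Ns) = card (idx_set Ms)"
      using card_image[OF inj] bij_betw_same_card[OF hb] by simp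
  qed
  with inj show ?thesis using that \<psi>(2) unfolding bij_betw_def by blast
qed

section \<open>Monomial matrices and the pair action\<close>

definition monomial_mat :: "nat \<Rightarrow> (nat \<Rightarrow> nat) \<Rightarrow> (nat \<Rightarrow> complex) \<Rightarrow> complex mat" where
  "monomial_mat n \<sigma> d = Matrix.mat n n (\<lambda>(i, j). if \<sigma> j = i then d j else 0)"

lemma monomial_mat_carrier [simp]: "monomial_mat n \<sigma> d \<in> carrier_mat n n"
  unfolding monomial_mat_def by simp

lemma dim_monomial_mat [simp]:
  "dim_row (monomial_mat n \<sigma> d) = n" "dim_col (monomial_mat n \<sigma> d) = n"
  unfolding monomial_mat_def by simp_all

lemma monomial_mat_index:
  "i < n \<Longrightarrow> j < n \<Longrightarrow> monomial_mat n \<sigma> d $$ (i, j) = (if \<sigma> j = i then d j else 0)"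
  unfolding monomial_mat_def by simp

lemma monomial_mat_cong:
  "(\<And>j. j < n \<Longrightarrow> \<sigma> j = \<sigma>' j) \<Longrightarrow> (\<And>j. j < n \<Longrightarrow> d j = d' j) \<Longrightarrow>
    monomial_mat n \<sigma> d = monomial_mat n \<sigma>' d'"
  by (rule eq_matI) (auto simp: monomial_mat_index)

lemma perm_mat_eq_monomial: "perm_mat n \<sigma> = monomial_mat n \<sigma> (\<lambda>_. 1)"
  unfolding perm_mat_def monomial_mat_def by simp

lemma perm_mat_mult_diag: "perm_mat n \<sigma> * mat_diag n d = monomial_mat n \<sigma> d"
  by (subst mat_diag_mult_right[of _ n n]) (auto simp: monomial_mat_def perm_mat_def)

lemma diag_mult_monomial_mat:
  "mat_diag n d * monomial_mat n \<rho> (\<lambda>_. 1) = monomial_mat n \<rho> (\<lambda>j. d (\<rho> j))"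
  by (subst mat_diag_mult_left[of _ n n]) (auto simp: monomial_mat_def)

lemma monomial_mat_mult:
  assumes "\<forall>j<n. \<tau> j < n"
  shows "monomial_mat n \<sigma> d * monomial_mat n \<tau> e = monomial_mat n (\<sigma> \<circ> \<tau>) (\<lambda>j. d (\<tau> j) * e j)"
proof (rule eq_matI)
  fix i j assume "i < dim_row (monomial_mat n (\<sigma> \<circ> \<tau>) (\<lambda>j. d (\<tau> j) * e j))"
    "j < dim_col (monomial_mat n (\<sigma> \<circ> \<tau>) (\<lambda>j. d (\<tau> j) * e j))"
  then have i: "i < n" and j: "j < n" by auto
  have "(monomial_mat n \<sigma> d * monomial_mat n \<tau> e) $$ (i, j)
      = (\<Sum>k<n. monomial_mat n \<sigma> d $$ (i, k) * monomial_mat n \<tau> e $$ (k, j))"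
    using i j by (simp add: scalar_prod_def row_def col_def atLeast0LessThan)
  also have "\<dots> = (\<Sum>k<n. if k = \<tau> j then (if \<sigma> (\<tau> j) = i then d (\<tau> j) * e j else 0) else 0)"
    by (rule sum.cong) (auto simp: monomial_mat_index i j)
  also have "\<dots> = (if \<sigma> (\<tau> j) = i then d (\<tau> j) * e j else 0)"
    using assms j by simp
  finally show "(monomial_mat n \<sigma> d * monomial_mat n \<tau> e) $$ (i, j)
      = monomial_mat n (\<sigma> \<circ> \<tau>) (\<lambda>j. d (\<tau> j) * e j) $$ (i, j)"
    using i j by (simp add: monomial_mat_index)
qed auto

lemma monomial_mat_eq_mult:
  assumes "\<forall>j<n. \<tau> j < n" "\<And>j. j < n \<Longrightarrow> \<sigma> j = \<rho> (\<tau> j)" "\<And>j. j < n \<Longrightarrow> d j = d' (\<tau> j) * e j"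
  shows "monomial_mat n \<sigma> d = monomial_mat n \<rho> d' * monomial_mat n \<tau> e"
  unfolding monomial_mat_mult[OF assms(1)] by (rule monomial_mat_cong) (simp_all add: assms(2,3))

lemma mult_monomial_mat_index:
  assumes "A \<in> carrier_mat n n" "i < n" "j < n" "\<tau> j < n"
  shows "(A * monomial_mat n \<tau> e) $$ (i, j) = A $$ (i, \<tau> j) * e j"
proof -
  have "(A * monomial_mat n \<tau> e) $$ (i, j) = (\<Sum>k<n. A $$ (i, k) * monomial_mat n \<tau> e $$ (k, j))"
    using assms by (simp add: scalar_prod_def row_def col_def atLeast0LessThan)
  also have "\<dots> = (\<Sum>k<n. if k = \<tau> j then A $$ (i, \<tau> j) * e j else 0)"
    by (rule sum.cong) (use assms in \<open>auto simp: monomial_mat_index\<close>)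
  finally show ?thesis using assms by simp
qed

lemma monomial_mat_mult_index:
  assumes "A \<in> carrier_mat n n" "inj_on \<sigma> {..<n}" "a < n" "j < n" "\<sigma> a < n"
  shows "(monomial_mat n \<sigma> d * A) $$ (\<sigma> a, j) = d a * A $$ (a, j)"
proof -
  have "(monomial_mat n \<sigma> d * A) $$ (\<sigma> a, j) = (\<Sum>k<n. monomial_mat n \<sigma> d $$ (\<sigma> a, k) * A $$ (k, j))"
    using assms by (simp add: scalar_prod_def row_def col_def atLeast0LessThan)
  also have "\<dots> = (\<Sum>k<n. if k = a then d a * A $$ (a, j) else 0)"
    by (rule sum.cong) (use assms in \<open>auto simp: monomial_mat_index dest: inj_onD\<close>)
  finally show ?thesis using assms by simp
qed

definition invertible_in :: "nat \<Rightarrow> complex mat \<Rightarrow> bool" where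
  "invertible_in n A \<longleftrightarrow> A \<in> carrier_mat n n \<and> (\<exists>B\<in>carrier_mat n n. A * B = 1\<^sub>m n \<and> B * A = 1\<^sub>m n)"

lemma invertible_in_mat_inv:
  assumes "invertible_in n A"
  shows "mat_inv A \<in> carrier_mat n n" "A * mat_inv A = 1\<^sub>m n" "mat_inv A * A = 1\<^sub>m n"
proof -
  obtain B where A: "A \<in> carrier_mat n n" and B: "B \<in> carrier_mat n n" "A * B = 1\<^sub>m n" "B * A = 1\<^sub>m n"
    using assms unfolding invertible_in_def by blast
  have "inverts_mat A B \<and> inverts_mat B A" using A B unfolding inverts_mat_def by auto
  then have "inverts_mat A (mat_inv A) \<and> inverts_mat (mat_inv A) A"
    unfolding mat_inv_def by (rule someI)
  then have 1: "A * mat_inv A = 1\<^sub>m n" and 2: "mat_inv A * A = 1\<^sub>m (dim_row (mat_inv A))"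
    using A unfolding inverts_mat_def by auto
  have "dim_col (mat_inv A) = n" "dim_row (mat_inv A) = n"
    using arg_cong[OF 1, of dim_col] arg_cong[OF 2, of dim_col] A by auto
  then show "mat_inv A \<in> carrier_mat n n" "A * mat_inv A = 1\<^sub>m n" "mat_inv A * A = 1\<^sub>m n"
    using 1 2 by auto
qed

lemma invertible_in_monomial_mat:
  assumes "\<sigma> permutes {..<n}" "\<forall>j<n. d j \<noteq> 0"
  shows "invertible_in n (monomial_mat n \<sigma> d)"
proof -
  let ?\<sigma>' = "inv_into UNIV \<sigma>"
  have lt: "\<forall>j<n. ?\<sigma>' j < n" "\<forall>j<n. \<sigma> j < n"
    using permutes_in_image[OF permutes_inv[OF assms(1)]] permutes_in_image[OF assms(1)] by auto
  let ?B = "monomial_mat n ?\<sigma>' (\<lambda>j. inverse (d (?\<sigma>' j)))"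
  have "monomial_mat n \<sigma> d * ?B = 1\<^sub>m n" "?B * monomial_mat n \<sigma> d = 1\<^sub>m n"
    unfolding monomial_mat_mult[OF lt(1)] monomial_mat_mult[OF lt(2)]
    by (rule eq_matI; auto simp: monomial_mat_index permutes_inverses[OF assms(1)] assms(2) lt)+
  then show ?thesis unfolding invertible_in_def by (intro conjI monomial_mat_carrier bexI) auto
qed

lemma invertible_in_mult:
  assumes "invertible_in n A" "invertible_in n B"
  shows "invertible_in n (A * B)"
proof -
  have A: "A \<in> carrier_mat n n" and B: "B \<in> carrier_mat n n" using assms unfolding invertible_in_def by auto
  note a = invertible_in_mat_inv[OF assms(1)] and b = invertible_in_mat_inv[OF assms(2)]
  have "(A * B) * (mat_inv B * mat_inv A) = A * (B * (mat_inv B * mat_inv A))"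
    using A B a b by (simp add: assoc_mult_mat[of _ n n _ n _ n])
  also have "B * (mat_inv B * mat_inv A) = (B * mat_inv B) * mat_inv A"
    by (rule assoc_mult_mat[OF B b(1) a(1), symmetric])
  finally have "(A * B) * (mat_inv B * mat_inv A) = 1\<^sub>m n" using a b A by simp
  moreover have "(mat_inv B * mat_inv A) * (A * B) = 1\<^sub>m n"
  proof -
    have "(mat_inv B * mat_inv A) * (A * B) = mat_inv B * (mat_inv A * (A * B))"
      using A B a b by (simp add: assoc_mult_mat[of _ n n _ n _ n])
    also have "mat_inv A * (A * B) = (mat_inv A * A) * B"
      by (rule assoc_mult_mat[OF a(1) A B, symmetric])
    finally show ?thesis using a b B by simp
  qed
  ultimately show ?thesis unfolding invertible_in_def using A B a b
    by (intro conjI mult_carrier_mat[of _ n n _ n] bexI[of _ "mat_inv B * mat_inv A"]) simp_all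
qed

lemma pair_act_eq_iff:
  assumes "S \<in> carrier_mat n n" "X \<in> carrier_mat n n" "Y \<in> carrier_mat n n" "invertible_in n T"
  shows "pair_act S T X = Y \<longleftrightarrow> S * X = Y * T"
proof -
  have T: "T \<in> carrier_mat n n" using assms(4) unfolding invertible_in_def by auto
  note t = invertible_in_mat_inv[OF assms(4)]
  have PT: "pair_act S T X * T = S * X" and YT: "Y * T * mat_inv T = Y"
    unfolding pair_act_def using assms t T by (simp_all add: assoc_mult_mat[of _ n n _ n _ n])
  show ?thesis
  proof
    assume "pair_act S T X = Y"
    then show "S * X = Y * T" using PT by simp
  next
    assume "S * X = Y * T"
    then show "pair_act S T X = Y" using YT unfolding pair_act_def by simp
  qed
qed

lemma pair_act_carrier:
  "S \<in> carrier_mat n n \<Longrightarrow> X \<in> carrier_mat n n \<Longrightarrow> invertible_in n T \<Longrightarrow> pair_act S T X \<in> carrier_mat n n"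
  unfolding pair_act_def using invertible_in_mat_inv(1) by (metis mult_carrier_mat)

lemma pair_act_mult:
  assumes "S \<in> carrier_mat n n" "S' \<in> carrier_mat n n" "invertible_in n T" "invertible_in n T'"
    "X \<in> carrier_mat n n"
  shows "pair_act (S * S') (T * T') X = pair_act S T (pair_act S' T' X)"
proof -
  let ?Y = "pair_act S' T' X"
  have T: "T \<in> carrier_mat n n" and T': "T' \<in> carrier_mat n n"
    using assms(3,4) unfolding invertible_in_def by auto
  let ?Z = "pair_act S T ?Y"
  have Y: "?Y \<in> carrier_mat n n" by (rule pair_act_carrier[OF assms(2,5,4)])
  have Z: "?Z \<in> carrier_mat n n" by (rule pair_act_carrier[OF assms(1) Y assms(3)])
  have "S * S' * X = S * (S' * X)" by (rule assoc_mult_mat[OF assms(1,2,5)])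
  also have "\<dots> = S * ?Y * T'"
    using pair_act_eq_iff[OF assms(2,5) Y assms(4)] assoc_mult_mat[OF assms(1) Y T'] by simp
  also have "\<dots> = ?Z * T * T'" using pair_act_eq_iff[OF assms(1) Y Z assms(3)] by simp
  also have "\<dots> = ?Z * (T * T')" by (rule assoc_mult_mat[OF Z T T'])
  finally show ?thesis
    using pair_act_eq_iff[OF mult_carrier_mat[OF assms(1,2)] assms(5) Z invertible_in_mult[OF assms(3,4)]]
    by simp
qed

lemma pair_act_cancel:
  assumes "invertible_in n S" "invertible_in n T" "X \<in> carrier_mat n n" "Y \<in> carrier_mat n n"
    and "pair_act S T X = pair_act S T Y"
  shows "X = Y"
proof -
  have S: "S \<in> carrier_mat n n" using assms(1) unfolding invertible_in_def by auto
  note s = invertible_in_mat_inv[OF assms(1)]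
  have Z: "pair_act S T Y \<in> carrier_mat n n" by (rule pair_act_carrier[OF S assms(4,2)])
  have "S * X = pair_act S T Y * T" using pair_act_eq_iff[OF S assms(3) Z assms(2)] assms(5) by blast
  moreover have "S * Y = pair_act S T Y * T" using pair_act_eq_iff[OF S assms(4) Z assms(2)] by blast
  ultimately have "S * X = S * Y" by simp
  have "X = mat_inv S * S * X" using s assms(3) by simp
  also have "\<dots> = mat_inv S * (S * X)" by (rule assoc_mult_mat[OF s(1) S assms(3)])
  also have "\<dots> = mat_inv S * (S * Y)" using \<open>S * X = S * Y\<close> by simp
  also have "\<dots> = mat_inv S * S * Y" by (rule assoc_mult_mat[OF s(1) S assms(4), symmetric])
  also have "\<dots> = Y" using s assms(4) by simp
  finally show ?thesis .
qed

lemma pair_act_monomial_iff: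
  assumes \<sigma>: "\<sigma> permutes {..<n}" and \<tau>: "\<tau> permutes {..<n}" and e: "\<forall>j<n. e j \<noteq> 0"
    and X: "X \<in> carrier_mat n n" and Y: "Y \<in> carrier_mat n n"
  shows "pair_act (monomial_mat n \<sigma> d) (monomial_mat n \<tau> e) X = Y \<longleftrightarrow>
         (\<forall>a<n. \<forall>j<n. Y $$ (\<sigma> a, \<tau> j) * e j = d a * X $$ (a, j))"
proof -
  have \<sigma>_lt: "\<sigma> a < n" and \<tau>_lt: "\<tau> a < n" if "a < n" for a
    using permutes_in_image[OF \<sigma>] permutes_in_image[OF \<tau>] that by auto
  have entry: "(monomial_mat n \<sigma> d * X) $$ (\<sigma> a, j) = d a * X $$ (a, j)"
    "(Y * monomial_mat n \<tau> e) $$ (\<sigma> a, j) = Y $$ (\<sigma> a, \<tau> j) * e j" if "a < n" "j < n" for a j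
    by (rule monomial_mat_mult_index[OF X permutes_inj_on[OF \<sigma>] that \<sigma>_lt[OF that(1)]],
        rule mult_monomial_mat_index[of Y n "\<sigma> a" j \<tau> e, OF Y \<sigma>_lt[OF that(1)] that(2) \<tau>_lt[OF that(2)]])
  have "pair_act (monomial_mat n \<sigma> d) (monomial_mat n \<tau> e) X = Y \<longleftrightarrow>
        monomial_mat n \<sigma> d * X = Y * monomial_mat n \<tau> e"
    by (rule pair_act_eq_iff[OF monomial_mat_carrier X Y invertible_in_monomial_mat[OF \<tau> e]])
  also have "\<dots> \<longleftrightarrow>
        (\<forall>a<n. \<forall>j<n. (monomial_mat n \<sigma> d * X) $$ (\<sigma> a, j) = (Y * monomial_mat n \<tau> e) $$ (\<sigma> a, j))"
  proof
    assume eq: "\<forall>a<n. \<forall>j<n. (monomial_mat n \<sigma> d * X) $$ (\<sigma> a, j) = (Y * monomial_mat n \<tau> e) $$ (\<sigma> a, j)"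
    show "monomial_mat n \<sigma> d * X = Y * monomial_mat n \<tau> e"
    proof (rule eq_matI)
      fix i j assume "i < dim_row (Y * monomial_mat n \<tau> e)" "j < dim_col (Y * monomial_mat n \<tau> e)"
      then have i: "i < n" and j: "j < n" using Y by auto
      define a where "a = inv_into UNIV \<sigma> i"
      have "a < n" "\<sigma> a = i"
        unfolding a_def using permutes_in_image[OF permutes_inv[OF \<sigma>]] permutes_inverses(1)[OF \<sigma>] i by auto
      then show "(monomial_mat n \<sigma> d * X) $$ (i, j) = (Y * monomial_mat n \<tau> e) $$ (i, j)"
        using eq j by auto
    qed (use X Y in auto)
  qed simp
  also have "\<dots> \<longleftrightarrow> (\<forall>a<n. \<forall>j<n. Y $$ (\<sigma> a, \<tau> j) * e j = d a * X $$ (a, j))"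
    using entry by (intro iffI allI impI; simp)
  finally show ?thesis .
qed

lemma enphased_perm_mats_iff: "S \<in> enphased_perm_mats n \<longleftrightarrow>
    (\<exists>\<sigma> d. \<sigma> permutes {..<n} \<and> (\<forall>i<n. cmod (d i) = 1) \<and> S = monomial_mat n \<sigma> d)"
proof
  assume "S \<in> enphased_perm_mats n"
  then obtain \<sigma> d where "\<sigma> permutes {..<n}" "\<forall>i<n. cmod (d i) = 1" "S = perm_mat n \<sigma> * mat_diag n d"
    unfolding enphased_perm_mats_def perm_mats_def unit_diag_mats_def by blast
  then show "\<exists>\<sigma> d. \<sigma> permutes {..<n} \<and> (\<forall>i<n. cmod (d i) = 1) \<and> S = monomial_mat n \<sigma> d"
    unfolding perm_mat_mult_diag by blast
next
  assume "\<exists>\<sigma> d. \<sigma> permutes {..<n} \<and> (\<forall>i<n. cmod (d i) = 1) \<and> S = monomial_mat n \<sigma> d"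
  then obtain \<sigma> d where "\<sigma> permutes {..<n}" "\<forall>i<n. cmod (d i) = 1" "S = perm_mat n \<sigma> * mat_diag n d"
    unfolding perm_mat_mult_diag by blast
  then show "S \<in> enphased_perm_mats n"
    unfolding enphased_perm_mats_def perm_mats_def unit_diag_mats_def by blast
qed

lemma perm_mats_iff: "P \<in> perm_mats n \<longleftrightarrow> (\<exists>\<sigma>. \<sigma> permutes {..<n} \<and> P = monomial_mat n \<sigma> (\<lambda>_. 1))"
  unfolding perm_mats_def perm_mat_eq_monomial by blast

lemma perm_mats_subset_enphased: "perm_mats n \<subseteq> enphased_perm_mats n"
proof
  fix P assume "P \<in> perm_mats n"
  then obtain \<sigma> where "\<sigma> permutes {..<n}" "P = monomial_mat n \<sigma> (\<lambda>_. 1)" unfolding perm_mats_iff by blast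
  then show "P \<in> enphased_perm_mats n" unfolding enphased_perm_mats_iff by force
qed

lemma enphased_perm_mat_invertible: "S \<in> enphased_perm_mats n \<Longrightarrow> invertible_in n S"
  unfolding enphased_perm_mats_iff by (force intro: invertible_in_monomial_mat)

lemma enphased_perm_mat_carrier: "S \<in> enphased_perm_mats n \<Longrightarrow> S \<in> carrier_mat n n"
  unfolding enphased_perm_mats_iff by auto

lemma enphased_perm_mats_mult:
  assumes "S \<in> enphased_perm_mats n" "S' \<in> enphased_perm_mats n"
  shows "S * S' \<in> enphased_perm_mats n"
proof -
  obtain \<sigma> d \<sigma>' d' where \<sigma>: "\<sigma> permutes {..<n}" "\<forall>i<n. cmod (d i) = 1" "S = monomial_mat n \<sigma> d"
    and \<sigma>': "\<sigma>' permutes {..<n}" "\<forall>i<n. cmod (d' i) = 1" "S' = monomial_mat n \<sigma>' d'"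
    using assms unfolding enphased_perm_mats_iff by blast
  have lt: "\<forall>j<n. \<sigma>' j < n" using permutes_in_image[OF \<sigma>'(1)] by simp
  show ?thesis
    unfolding enphased_perm_mats_iff \<sigma>(3) \<sigma>'(3) monomial_mat_mult[OF lt]
    using permutes_compose[OF \<sigma>'(1) \<sigma>(1)] \<sigma>(2) \<sigma>'(2) lt
    by (intro exI[of _ "\<sigma> \<circ> \<sigma>'"] exI[of _ "\<lambda>j. d (\<sigma>' j) * d' j"]) (simp add: norm_mult)
qed

lemma Map_S_subset_Map_P: "Map_S n X Y \<subseteq> Map_P n X Y"
  unfolding Map_S_def Map_P_def using perm_mats_subset_enphased by blast

lemma Map_P_mult:
  assumes "(S, T) \<in> Map_P n Y Z" "(S', T') \<in> Map_P n X Y" "X \<in> carrier_mat n n"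
  shows "(S * S', T * T') \<in> Map_P n X Z"
proof -
  have S: "S \<in> enphased_perm_mats n" "T \<in> enphased_perm_mats n" "pair_act S T Y = Z"
    and S': "S' \<in> enphased_perm_mats n" "T' \<in> enphased_perm_mats n" "pair_act S' T' X = Y"
    using assms(1,2) unfolding Map_P_def by auto
  have "pair_act (S * S') (T * T') X = pair_act S T (pair_act S' T' X)"
    by (rule pair_act_mult[OF enphased_perm_mat_carrier[OF S(1)] enphased_perm_mat_carrier[OF S'(1)]
          enphased_perm_mat_invertible[OF S(2)] enphased_perm_mat_invertible[OF S'(2)] assms(3)])
  then show ?thesis using S S' enphased_perm_mats_mult unfolding Map_P_def by auto
qed

lemma Map_P_mult_left_fixes:
  assumes "(S * P, T * R) \<in> Map_P n X Y" "(P, R) \<in> Map_P n X Y"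
    and S: "S \<in> enphased_perm_mats n" and T: "T \<in> enphased_perm_mats n" and X: "X \<in> carrier_mat n n"
  shows "pair_act S T Y = Y"
proof -
  have P: "P \<in> enphased_perm_mats n" "R \<in> enphased_perm_mats n" "pair_act P R X = Y"
    using assms(2) unfolding Map_P_def by auto
  have "pair_act S T Y = pair_act (S * P) (T * R) X"
    using pair_act_mult[OF enphased_perm_mat_carrier[OF S] enphased_perm_mat_carrier[OF P(1)]
        enphased_perm_mat_invertible[OF T] enphased_perm_mat_invertible[OF P(2)] X] P(3) by simp
  also have "\<dots> = Y" using assms(1) unfolding Map_P_def by simp
  finally show ?thesis .
qed

lemma Map_P_mult_right_fixes:
  assumes "(P * S, R * T) \<in> Map_P n X Y" "(P, R) \<in> Map_P n X Y"
    and S: "S \<in> enphased_perm_mats n" and T: "T \<in> enphased_perm_mats n" and X: "X \<in> carrier_mat n n"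
  shows "pair_act S T X = X"
proof -
  have P: "P \<in> enphased_perm_mats n" "R \<in> enphased_perm_mats n" "pair_act P R X = Y"
    using assms(2) unfolding Map_P_def by auto
  note inv = enphased_perm_mat_invertible[OF P(1)] enphased_perm_mat_invertible[OF P(2)]
    enphased_perm_mat_invertible[OF T]
  have "pair_act P R (pair_act S T X) = pair_act (P * S) (R * T) X"
    by (rule pair_act_mult[symmetric, OF enphased_perm_mat_carrier[OF P(1)] enphased_perm_mat_carrier[OF S]
          inv(2,3) X])
  also have "\<dots> = pair_act P R X" using assms(1) P(3) unfolding Map_P_def by simp
  finally show ?thesis
    by (rule pair_act_cancel[OF inv(1,2) pair_act_carrier[OF enphased_perm_mat_carrier[OF S] X inv(3)] X])
qed

section \<open>Translations of the index group\<close>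

definition idx_translation :: "nat list \<Rightarrow> nat list \<Rightarrow> nat \<Rightarrow> nat" where
  "idx_translation Ns k a = (if a < prod_list Ns
     then inv_into {..<prod_list Ns} (to_idx Ns) (idx_add Ns (to_idx Ns a) k) else a)"

lemma idx_translation:
  assumes "pos_moduli Ns" "a < prod_list Ns"
  shows "idx_translation Ns k a < prod_list Ns"
    and "to_idx Ns (idx_translation Ns k a) = idx_add Ns (to_idx Ns a) k"
proof -
  have x: "idx_add Ns (to_idx Ns a) k \<in> to_idx Ns ` {..<prod_list Ns}"
    using bij_betw_to_idx[OF assms(1)] idx_add_closed[OF assms(1)] by (simp add: bij_betw_def)
  show "idx_translation Ns k a < prod_list Ns"
    unfolding idx_translation_def using assms(2) inv_into_into[OF x] by simp
  show "to_idx Ns (idx_translation Ns k a) = idx_add Ns (to_idx Ns a) k"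
    unfolding idx_translation_def using assms(2) f_inv_into_f[OF x] by simp
qed

lemma idx_translation_permutes:
  assumes "pos_moduli Ns"
  shows "idx_translation Ns k permutes {..<prod_list Ns}"
proof (rule inj_imp_permutes)
  show "inj_on (idx_translation Ns k) {..<prod_list Ns}"
  proof (rule inj_onI)
    fix a b assume a: "a \<in> {..<prod_list Ns}" and b: "b \<in> {..<prod_list Ns}"
      and "idx_translation Ns k a = idx_translation Ns k b"
    then have "idx_add Ns (to_idx Ns a) k = idx_add Ns (to_idx Ns b) k"
      using idx_translation(2)[OF assms] by (metis lessThan_iff)
    then have "to_idx Ns a = to_idx Ns b"
      using idx_add_right_cancel to_idx_in_idx_set[OF assms] a b by blast
    then show "a = b" using inj_onD[OF inj_on_to_idx[OF assms]] a b by blast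
  qed
  show "\<And>x. x \<notin> {..<prod_list Ns} \<Longrightarrow> idx_translation Ns k x = x"
    unfolding idx_translation_def by simp
qed (use idx_translation(1)[OF assms] in auto)

lemma shift_mat_eq_monomial:
  assumes "pos_moduli Ns"
  shows "shift_mat Ns k = monomial_mat (prod_list Ns) (inv_into UNIV (idx_translation Ns k)) (\<lambda>_. 1)"
proof (rule eq_matI)
  note p = idx_translation_permutes[OF assms, of k]
  fix i j assume "i < dim_row (monomial_mat (prod_list Ns) (inv_into UNIV (idx_translation Ns k)) (\<lambda>_. 1))"
    "j < dim_col (monomial_mat (prod_list Ns) (inv_into UNIV (idx_translation Ns k)) (\<lambda>_. 1))"
  then have i: "i < prod_list Ns" and j: "j < prod_list Ns" by auto
  have "to_idx Ns j = idx_add Ns (to_idx Ns i) k \<longleftrightarrow> idx_translation Ns k i = j"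
    using idx_translation[OF assms i] inj_onD[OF inj_on_to_idx[OF assms]] j by auto
  then show "shift_mat Ns k $$ (i, j)
      = monomial_mat (prod_list Ns) (inv_into UNIV (idx_translation Ns k)) (\<lambda>_. 1) $$ (i, j)"
    unfolding shift_mat_def using i j by (simp add: monomial_mat_index permutes_inv_eq[OF p])
qed (auto simp: shift_mat_def)

lemma DZ_mats_eq:
  assumes "pos_moduli Ns"
  shows "DZ_mats Ns = {monomial_mat (prod_list Ns) (inv_into UNIV (idx_translation Ns k)) d | d k.
                         k \<in> idx_set Ns \<and> (\<forall>i<prod_list Ns. cmod (d i) = 1)}"
    (is "_ = ?M")
proof -
  let ?n = "prod_list Ns" and ?\<rho> = "\<lambda>k. inv_into UNIV (idx_translation Ns k)"
  have DZ: "mat_diag ?n d * shift_mat Ns k = monomial_mat ?n (?\<rho> k) (\<lambda>j. d (?\<rho> k j))" for d k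
    using shift_mat_eq_monomial[OF assms] diag_mult_monomial_mat by simp
  have \<rho>_lt: "?\<rho> k j < ?n" if "j < ?n" for k j
    using permutes_in_image[OF permutes_inv[OF idx_translation_permutes[OF assms]]] that by auto
  show ?thesis
  proof (intro Set.set_eqI iffI)
    fix S assume "S \<in> DZ_mats Ns"
    then obtain d k where "k \<in> idx_set Ns" "\<forall>i<?n. cmod (d i) = 1" "S = mat_diag ?n d * shift_mat Ns k"
      unfolding DZ_mats_def unit_diag_mats_def by blast
    then show "S \<in> ?M" unfolding DZ using \<rho>_lt by blast
  next
    fix S assume "S \<in> ?M"
    then obtain d k where k: "k \<in> idx_set Ns" and d: "\<forall>i<?n. cmod (d i) = 1"
      and S: "S = monomial_mat ?n (?\<rho> k) d" by blast
    have "S = mat_diag ?n (\<lambda>i. d (idx_translation Ns k i)) * shift_mat Ns k"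
      unfolding S DZ using permutes_inverses(1)[OF idx_translation_permutes[OF assms]] by simp
    moreover have "\<forall>i<?n. cmod (d (idx_translation Ns k i)) = 1"
      using d idx_translation(1)[OF assms] by blast
    ultimately show "S \<in> DZ_mats Ns" unfolding DZ_mats_def unit_diag_mats_def using k by blast
  qed
qed

lemma DZ_mats_subset_enphased:
  assumes "pos_moduli Ns"
  shows "DZ_mats Ns \<subseteq> enphased_perm_mats (prod_list Ns)"
proof
  fix S assume "S \<in> DZ_mats Ns"
  then obtain d k where "\<forall>i<prod_list Ns. cmod (d i) = 1"
    "S = monomial_mat (prod_list Ns) (inv_into UNIV (idx_translation Ns k)) d"
    unfolding DZ_mats_eq[OF assms] by blast
  then show "S \<in> enphased_perm_mats (prod_list Ns)"
    unfolding enphased_perm_mats_iff using permutes_inv[OF idx_translation_permutes[OF assms]] by blast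
qed

lemma Stab_Z_subset_Map_P:
  "pos_moduli Ns \<Longrightarrow> Stab_Z Ns \<subseteq> Map_P (prod_list Ns) (fourier Ns) (fourier Ns)"
  unfolding Stab_Z_def Map_P_def using DZ_mats_subset_enphased by blast

section \<open>Equivalences between Fourier matrices\<close>

text \<open>The phases cancel when an entry is compared with the row \<open>a0\<close> and the column \<open>j0\<close> that are
  mapped onto the all-ones first row and column of \<open>Y\<close>.\<close>

lemma monomial_equiv_dephased:
  fixes X Y :: "complex mat"
  assumes \<sigma>: "\<sigma> permutes {..<n}" and \<tau>: "\<tau> permutes {..<n}"
    and eq: "\<forall>a<n. \<forall>j<n. Y $$ (\<sigma> a, \<tau> j) * e j = d a * X $$ (a, j)"
    and row: "\<And>k. k < n \<Longrightarrow> Y $$ (0, k) = 1" and col: "\<And>k. k < n \<Longrightarrow> Y $$ (k, 0) = 1"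
    and a0: "a0 < n" "\<sigma> a0 = 0" "d a0 \<noteq> 0" and j0: "j0 < n" "\<tau> j0 = 0"
    and a: "a < n" and j: "j < n"
  shows "Y $$ (\<sigma> a, \<tau> j) * X $$ (a0, j) * X $$ (a, j0) = X $$ (a0, j0) * X $$ (a, j)"
proof -
  have \<sigma>_lt: "\<sigma> k < n" and \<tau>_lt: "\<tau> k < n" if "k < n" for k
    using permutes_in_image[OF \<sigma>] permutes_in_image[OF \<tau>] that by auto
  have e_row: "e k = d a0 * X $$ (a0, k)" if "k < n" for k
    using eq a0 that row[OF \<tau>_lt[OF that]] by force
  have e_col: "e j0 = d a * X $$ (a, j0)"
    using eq j0 a col[OF \<sigma>_lt[OF a]] by force
  have "d a0 * (Y $$ (\<sigma> a, \<tau> j) * X $$ (a0, j) * X $$ (a, j0))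
      = (Y $$ (\<sigma> a, \<tau> j) * e j) * X $$ (a, j0)"
    using e_row[OF j] by (simp add: ac_simps)
  also have "\<dots> = e j0 * X $$ (a, j)" using eq a j e_col by (simp add: ac_simps)
  also have "\<dots> = d a0 * (X $$ (a0, j0) * X $$ (a, j))" using e_row[OF j0(1)] by (simp add: ac_simps)
  finally show ?thesis using a0(3) by simp
qed

lemma fourier_translation_identity:
  assumes pos: "pos_moduli Ns" and lt: "a < prod_list Ns" "j < prod_list Ns" "a0 < prod_list Ns" "j0 < prod_list Ns"
  defines "a' \<equiv> idx_translation Ns (to_idx Ns a0) a" and "j' \<equiv> idx_translation Ns (to_idx Ns j0) j"
  shows "fourier Ns $$ (a', j') * fourier Ns $$ (a0, j0)
       = fourier Ns $$ (a0, j') * fourier Ns $$ (a', j0) * fourier Ns $$ (a, j)"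
proof -
  have "a' < prod_list Ns" "j' < prod_list Ns"
    and "to_idx Ns a' = idx_add Ns (to_idx Ns a) (to_idx Ns a0)"
    and "to_idx Ns j' = idx_add Ns (to_idx Ns j) (to_idx Ns j0)"
    unfolding a'_def j'_def using idx_translation[OF pos] lt by auto
  then show ?thesis using lt
    by (simp add: fourier_index idx_pairing_add_left[OF pos] idx_pairing_add_right[OF pos] ac_simps)
qed

locale fourier_pair =
  fixes Ns Ms :: "nat list" and N :: nat
  assumes pos_Ns: "pos_moduli Ns" and pos_Ms: "pos_moduli Ms"
    and N_Ns: "N = prod_list Ns" and N_Ms: "N = prod_list Ms"
begin

abbreviation F :: "complex mat" where "F \<equiv> fourier Ns"
abbreviation G :: "complex mat" where "G \<equiv> fourier Ms"

lemma F_carrier: "F \<in> carrier_mat N N"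
  unfolding N_Ns by simp

lemma G_carrier: "G \<in> carrier_mat N N"
  unfolding N_Ms by simp

lemma bij_Ns: "bij_betw (to_idx Ns) {..<N} (idx_set Ns)"
  and bij_Ms: "bij_betw (to_idx Ms) {..<N} (idx_set Ms)"
  using bij_betw_to_idx[OF pos_Ns] bij_betw_to_idx[OF pos_Ms] N_Ns N_Ms by simp_all

lemma idx_map_of_perm:
  assumes "\<sigma> permutes {..<N}"
  obtains f where "bij_betw f (idx_set Ns) (idx_set Ms)" "\<And>a. a < N \<Longrightarrow> to_idx Ms (\<sigma> a) = f (to_idx Ns a)"
proof
  show "bij_betw (to_idx Ms \<circ> \<sigma> \<circ> inv_into {..<N} (to_idx Ns)) (idx_set Ns) (idx_set Ms)"
    by (rule bij_betw_trans[OF bij_betw_inv_into[OF bij_Ns] bij_betw_trans[OF permutes_imp_bij[OF assms] bij_Ms]])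
  show "to_idx Ms (\<sigma> a) = (to_idx Ms \<circ> \<sigma> \<circ> inv_into {..<N} (to_idx Ns)) (to_idx Ns a)" if "a < N" for a
    using bij_Ns that by (simp add: bij_betw_inv_into_left)
qed

lemma perm_of_idx_map:
  assumes f: "bij_betw f (idx_set Ns) (idx_set Ms)"
  obtains \<sigma> where "\<sigma> permutes {..<N}" "\<And>a. a < N \<Longrightarrow> to_idx Ms (\<sigma> a) = f (to_idx Ns a)"
proof
  let ?\<sigma>0 = "inv_into {..<N} (to_idx Ms) \<circ> f \<circ> to_idx Ns"
  have "bij_betw ?\<sigma>0 {..<N} {..<N}"
    by (rule bij_betw_trans[OF bij_Ns bij_betw_trans[OF f bij_betw_inv_into[OF bij_Ms]]])
  then show "(\<lambda>a. if a < N then ?\<sigma>0 a else a) permutes {..<N}"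
    by (intro bij_imp_permutes) (auto intro: bij_betw_cong[THEN iffD1, rotated])
  show "to_idx Ms (if a < N then ?\<sigma>0 a else a) = f (to_idx Ns a)" if "a < N" for a
    using that bij_betw_apply[OF bij_Ns] bij_betw_apply[OF f] bij_Ms
    by (simp add: bij_betw_inv_into_right)
qed

lemma perm_equiv_iff_pairing_preserving:
  assumes \<sigma>: "\<sigma> permutes {..<N}" and \<tau>: "\<tau> permutes {..<N}"
    and f: "\<And>a. a < N \<Longrightarrow> to_idx Ms (\<sigma> a) = f (to_idx Ns a)"
    and g: "\<And>a. a < N \<Longrightarrow> to_idx Ms (\<tau> a) = g (to_idx Ns a)"
  shows "(\<forall>a<N. \<forall>j<N. G $$ (\<sigma> a, \<tau> j) = F $$ (a, j)) \<longleftrightarrow>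
         (\<forall>x\<in>idx_set Ns. \<forall>y\<in>idx_set Ns. idx_pairing Ms (f x) (g y) = idx_pairing Ns x y)"
proof -
  have "G $$ (\<sigma> a, \<tau> j) = idx_pairing Ms (f (to_idx Ns a)) (g (to_idx Ns j))"
    and "F $$ (a, j) = idx_pairing Ns (to_idx Ns a) (to_idx Ns j)" if "a < N" "j < N" for a j
    using that permutes_in_image[OF \<sigma>] permutes_in_image[OF \<tau>] f g N_Ns N_Ms
    by (simp_all add: fourier_index)
  moreover have "idx_set Ns = to_idx Ns ` {..<N}" using bij_Ns by (simp add: bij_betw_def)
  ultimately show ?thesis by auto
qed

lemma perm_equiv_idx_iso:
  assumes \<sigma>: "\<sigma> permutes {..<N}" and \<tau>: "\<tau> permutes {..<N}"
    and eq: "\<forall>a<N. \<forall>j<N. G $$ (\<sigma> a, \<tau> j) = F $$ (a, j)"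
  obtains f where "f \<in> iso (idx_group Ns) (idx_group Ms)" "\<And>a. a < N \<Longrightarrow> to_idx Ms (\<sigma> a) = f (to_idx Ns a)"
proof -
  obtain f g where f: "bij_betw f (idx_set Ns) (idx_set Ms)" "\<And>a. a < N \<Longrightarrow> to_idx Ms (\<sigma> a) = f (to_idx Ns a)"
    and g: "bij_betw g (idx_set Ns) (idx_set Ms)" "\<And>a. a < N \<Longrightarrow> to_idx Ms (\<tau> a) = g (to_idx Ns a)"
    using idx_map_of_perm[OF \<sigma>] idx_map_of_perm[OF \<tau>] by metis
  have "f \<in> iso (idx_group Ns) (idx_group Ms)"
    using pairing_preserving_bij_imp_iso[OF pos_Ns pos_Ms f(1) g(1)]
      perm_equiv_iff_pairing_preserving[OF \<sigma> \<tau> f(2) g(2)] eq by blast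
  then show ?thesis using f(2) by (rule that)
qed

lemma perm_equiv_iff_iso:
  "(\<exists>\<sigma> \<tau>. \<sigma> permutes {..<N} \<and> \<tau> permutes {..<N} \<and> (\<forall>a<N. \<forall>j<N. G $$ (\<sigma> a, \<tau> j) = F $$ (a, j)))
   \<longleftrightarrow> idx_group Ns \<cong> idx_group Ms"
proof
  assume "\<exists>\<sigma> \<tau>. \<sigma> permutes {..<N} \<and> \<tau> permutes {..<N} \<and> (\<forall>a<N. \<forall>j<N. G $$ (\<sigma> a, \<tau> j) = F $$ (a, j))"
  then obtain \<sigma> \<tau> where "\<sigma> permutes {..<N}" "\<tau> permutes {..<N}"
    "\<forall>a<N. \<forall>j<N. G $$ (\<sigma> a, \<tau> j) = F $$ (a, j)" by blast
  then obtain f where "f \<in> iso (idx_group Ns) (idx_group Ms)"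
    "\<And>a. a < N \<Longrightarrow> to_idx Ms (\<sigma> a) = f (to_idx Ns a)"
    using perm_equiv_idx_iso by blast
  from this(1) show "idx_group Ns \<cong> idx_group Ms" by (rule is_isoI)
next
  assume "idx_group Ns \<cong> idx_group Ms"
  then obtain h where h: "h \<in> iso (idx_group Ns) (idx_group Ms)" unfolding is_iso_def by blast
  then have hb: "bij_betw h (idx_set Ns) (idx_set Ms)" unfolding iso_def idx_group_def by simp
  obtain \<psi> where \<psi>: "bij_betw \<psi> (idx_set Ns) (idx_set Ms)"
    "\<And>x y. x \<in> idx_set Ns \<Longrightarrow> y \<in> idx_set Ns \<Longrightarrow> idx_pairing Ms (h x) (\<psi> y) = idx_pairing Ns x y"
    using iso_imp_pairing_dual[OF pos_Ns pos_Ms h] by blast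
  obtain \<sigma> \<tau> where \<sigma>: "\<sigma> permutes {..<N}" "\<And>a. a < N \<Longrightarrow> to_idx Ms (\<sigma> a) = h (to_idx Ns a)"
    and \<tau>: "\<tau> permutes {..<N}" "\<And>a. a < N \<Longrightarrow> to_idx Ms (\<tau> a) = \<psi> (to_idx Ns a)"
    using perm_of_idx_map[OF hb] perm_of_idx_map[OF \<psi>(1)] by metis
  show "\<exists>\<sigma> \<tau>. \<sigma> permutes {..<N} \<and> \<tau> permutes {..<N} \<and> (\<forall>a<N. \<forall>j<N. G $$ (\<sigma> a, \<tau> j) = F $$ (a, j))"
    using perm_equiv_iff_pairing_preserving[OF \<sigma>(1) \<tau>(1) \<sigma>(2) \<tau>(2)] \<psi>(2) \<sigma>(1) \<tau>(1) by blast
qed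

text \<open>The row permutation of a permutation equivalence is, on indices, a group isomorphism,
  so it conjugates translations of \<open>I\<^sub>F\<close> into translations of \<open>I\<^sub>G\<close>.\<close>

lemma perm_equiv_conj_translation:
  assumes \<sigma>: "\<sigma> permutes {..<N}" and \<tau>: "\<tau> permutes {..<N}"
    and eq: "\<forall>a<N. \<forall>j<N. G $$ (\<sigma> a, \<tau> j) = F $$ (a, j)" and \<alpha>: "\<alpha> \<in> idx_set Ns"
  obtains \<gamma> where "\<gamma> \<in> idx_set Ms"
    "\<And>j. j < N \<Longrightarrow> \<sigma> (idx_translation Ns \<alpha> j) = idx_translation Ms \<gamma> (\<sigma> j)"
proof -
  obtain f where iso: "f \<in> iso (idx_group Ns) (idx_group Ms)"
    and f: "\<And>a. a < N \<Longrightarrow> to_idx Ms (\<sigma> a) = f (to_idx Ns a)"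
    using perm_equiv_idx_iso[OF \<sigma> \<tau> eq] by blast
  have hom: "f (idx_add Ns x y) = idx_add Ms (f x) (f y)" if "x \<in> idx_set Ns" "y \<in> idx_set Ns" for x y
    using iso that unfolding iso_def hom_def idx_group_def by auto
  have f_in: "f \<alpha> \<in> idx_set Ms" using iso \<alpha> unfolding iso_def hom_def idx_group_def by auto
  have "\<sigma> (idx_translation Ns \<alpha> j) = idx_translation Ms (f \<alpha>) (\<sigma> j)" if j: "j < N" for j
  proof -
    have tr_N: "idx_translation Ns \<alpha> j < N" "to_idx Ns (idx_translation Ns \<alpha> j) = idx_add Ns (to_idx Ns j) \<alpha>"
      using idx_translation[OF pos_Ns] j N_Ns by auto
    have \<sigma>j: "\<sigma> j < N" using permutes_in_image[OF \<sigma>] j by simp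
    have tr_M: "idx_translation Ms (f \<alpha>) (\<sigma> j) < N"
      "to_idx Ms (idx_translation Ms (f \<alpha>) (\<sigma> j)) = idx_add Ms (to_idx Ms (\<sigma> j)) (f \<alpha>)"
      using idx_translation[OF pos_Ms] \<sigma>j N_Ms by auto
    have "to_idx Ms (\<sigma> (idx_translation Ns \<alpha> j)) = idx_add Ms (f (to_idx Ns j)) (f \<alpha>)"
      using f[OF tr_N(1)] tr_N(2) hom bij_betw_apply[OF bij_Ns] j \<alpha> by simp
    also have "\<dots> = to_idx Ms (idx_translation Ms (f \<alpha>) (\<sigma> j))" using tr_M(2) f[OF j] by simp
    finally show ?thesis
      using inj_onD[OF bij_betw_imp_inj_on[OF bij_Ms]] tr_M(1) permutes_in_image[OF \<sigma>] tr_N(1) by simp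
  qed
  then show ?thesis using that f_in by blast
qed

lemma monomial_equiv_imp_translated_perm_equiv:
  assumes \<sigma>: "\<sigma> permutes {..<N}" and \<tau>: "\<tau> permutes {..<N}" and d: "\<forall>i<N. d i \<noteq> 0"
    and eq: "\<forall>a<N. \<forall>j<N. G $$ (\<sigma> a, \<tau> j) * e j = d a * F $$ (a, j)"
  obtains \<alpha> \<beta> where "\<alpha> \<in> idx_set Ns" "\<beta> \<in> idx_set Ns"
    "\<forall>a<N. \<forall>j<N. G $$ (\<sigma> (idx_translation Ns \<alpha> a), \<tau> (idx_translation Ns \<beta> j)) = F $$ (a, j)"
proof
  define a0 where "a0 = inv_into UNIV \<sigma> 0"
  define j0 where "j0 = inv_into UNIV \<tau> 0"
  have N0: "0 < N" using prod_list_ge_1[OF pos_Ns] N_Ns by simp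
  have a0: "a0 < N" "\<sigma> a0 = 0" and j0: "j0 < N" "\<tau> j0 = 0"
    unfolding a0_def j0_def using N0 permutes_in_image[OF permutes_inv[OF \<sigma>]]
      permutes_in_image[OF permutes_inv[OF \<tau>]] permutes_inverses(1)[OF \<sigma>] permutes_inverses(1)[OF \<tau>]
    by auto
  show "to_idx Ns a0 \<in> idx_set Ns" "to_idx Ns j0 \<in> idx_set Ns"
    using to_idx_in_idx_set[OF pos_Ns] a0 j0 N_Ns by auto
  show "\<forall>a<N. \<forall>j<N. G $$ (\<sigma> (idx_translation Ns (to_idx Ns a0) a), \<tau> (idx_translation Ns (to_idx Ns j0) j))
                  = F $$ (a, j)"
  proof (intro allI impI)
    fix a j assume a: "a < N" and j: "j < N"
    define a' where "a' = idx_translation Ns (to_idx Ns a0) a"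
    define j' where "j' = idx_translation Ns (to_idx Ns j0) j"
    have a': "a' < N" and j': "j' < N" unfolding a'_def j'_def using idx_translation(1)[OF pos_Ns] a j N_Ns by auto
    have "G $$ (\<sigma> a', \<tau> j') * (F $$ (a0, j') * F $$ (a', j0)) = F $$ (a0, j0) * F $$ (a', j')"
      using monomial_equiv_dephased[OF \<sigma> \<tau> eq _ _ a0 _ j0 a' j'] d a0(1)
        fourier_first_row[of _ Ms] fourier_first_col[of _ Ms] N_Ms by (simp add: ac_simps)
    also have "\<dots> = F $$ (a, j) * (F $$ (a0, j') * F $$ (a', j0))"
      using fourier_translation_identity[OF pos_Ns, of a j a0 j0] a j a0(1) j0(1) N_Ns
      unfolding a'_def j'_def by (simp add: ac_simps)
    finally show "G $$ (\<sigma> a', \<tau> j') = F $$ (a, j)"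
      using fourier_nonzero a' j' a0(1) j0(1) N_Ns by simp
  qed
qed

lemma Map_P_normal_form:
  assumes "(S, T) \<in> Map_P N F G"
  obtains \<sigma> d \<tau> e \<alpha> \<beta> where "\<sigma> permutes {..<N}" "\<forall>i<N. cmod (d i) = 1" "S = monomial_mat N \<sigma> d"
    "\<tau> permutes {..<N}" "\<forall>i<N. cmod (e i) = 1" "T = monomial_mat N \<tau> e"
    "\<alpha> \<in> idx_set Ns" "\<beta> \<in> idx_set Ns"
    "\<forall>a<N. \<forall>j<N. G $$ (\<sigma> (idx_translation Ns \<alpha> a), \<tau> (idx_translation Ns \<beta> j)) = F $$ (a, j)"
proof -
  obtain \<sigma> d \<tau> e where \<sigma>: "\<sigma> permutes {..<N}" "\<forall>i<N. cmod (d i) = 1" "S = monomial_mat N \<sigma> d"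
    and \<tau>: "\<tau> permutes {..<N}" "\<forall>i<N. cmod (e i) = 1" "T = monomial_mat N \<tau> e"
    and act: "pair_act S T F = G"
    using assms unfolding Map_P_def enphased_perm_mats_iff by blast
  have d: "\<forall>i<N. d i \<noteq> 0" and e: "\<forall>i<N. e i \<noteq> 0" using \<sigma>(2) \<tau>(2) by auto
  have "\<forall>a<N. \<forall>j<N. G $$ (\<sigma> a, \<tau> j) * e j = d a * F $$ (a, j)"
    using act pair_act_monomial_iff[OF \<sigma>(1) \<tau>(1) e F_carrier G_carrier] \<sigma>(3) \<tau>(3) by blast
  then obtain \<alpha> \<beta> where "\<alpha> \<in> idx_set Ns" "\<beta> \<in> idx_set Ns"
    "\<forall>a<N. \<forall>j<N. G $$ (\<sigma> (idx_translation Ns \<alpha> a), \<tau> (idx_translation Ns \<beta> j)) = F $$ (a, j)"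
    by (rule monomial_equiv_imp_translated_perm_equiv[OF \<sigma>(1) \<tau>(1) d])
  then show ?thesis by (rule that[OF \<sigma> \<tau>])
qed

lemma perm_equiv_in_Map_S:
  assumes "\<sigma> permutes {..<N}" "\<tau> permutes {..<N}" "\<forall>a<N. \<forall>j<N. G $$ (\<sigma> a, \<tau> j) = F $$ (a, j)"
  shows "(monomial_mat N \<sigma> (\<lambda>_. 1), monomial_mat N \<tau> (\<lambda>_. 1)) \<in> Map_S N F G"
  using assms pair_act_monomial_iff[OF assms(1,2) _ F_carrier G_carrier, of "\<lambda>_. 1"]
  unfolding Map_S_def perm_mats_iff by auto

lemma idx_translation_Ns_permutes: "idx_translation Ns k permutes {..<N}"
  using idx_translation_permutes[OF pos_Ns] N_Ns by simp

lemma idx_translation_Ms_permutes: "idx_translation Ms k permutes {..<N}"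
  using idx_translation_permutes[OF pos_Ms] N_Ms by simp

lemma monomial_mat_split_translation_right:
  assumes \<sigma>: "\<sigma> permutes {..<N}" and d: "\<forall>i<N. cmod (d i) = 1" and \<alpha>: "\<alpha> \<in> idx_set Ns"
  shows "monomial_mat N \<sigma> d = monomial_mat N (\<sigma> \<circ> idx_translation Ns \<alpha>) (\<lambda>_. 1)
                              * monomial_mat N (inv_into UNIV (idx_translation Ns \<alpha>)) d"
    and "monomial_mat N (inv_into UNIV (idx_translation Ns \<alpha>)) d \<in> DZ_mats Ns"
proof -
  show "monomial_mat N \<sigma> d = monomial_mat N (\<sigma> \<circ> idx_translation Ns \<alpha>) (\<lambda>_. 1)
                              * monomial_mat N (inv_into UNIV (idx_translation Ns \<alpha>)) d"
    using permutes_in_image[OF permutes_inv[OF idx_translation_Ns_permutes]]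
      permutes_inverses(1)[OF idx_translation_Ns_permutes]
    by (intro monomial_mat_eq_mult) auto
  show "monomial_mat N (inv_into UNIV (idx_translation Ns \<alpha>)) d \<in> DZ_mats Ns"
    unfolding DZ_mats_eq[OF pos_Ns] using \<alpha> d N_Ns by blast
qed

lemma monomial_mat_split_translation_left:
  assumes \<sigma>: "\<sigma> permutes {..<N}" and d: "\<forall>i<N. cmod (d i) = 1" and \<gamma>: "\<gamma> \<in> idx_set Ms"
    and conj: "\<And>j. j < N \<Longrightarrow> idx_translation Ms \<gamma> (\<sigma> j) = \<sigma> (idx_translation Ns \<alpha> j)"
  defines "\<sigma>' \<equiv> \<sigma> \<circ> idx_translation Ns \<alpha>"
  shows "monomial_mat N \<sigma> d = monomial_mat N (inv_into UNIV (idx_translation Ms \<gamma>)) (\<lambda>j. d (inv_into UNIV \<sigma>' j))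
                              * monomial_mat N \<sigma>' (\<lambda>_. 1)"
    and "monomial_mat N (inv_into UNIV (idx_translation Ms \<gamma>)) (\<lambda>j. d (inv_into UNIV \<sigma>' j)) \<in> DZ_mats Ms"
proof -
  have \<sigma>': "\<sigma>' permutes {..<N}"
    unfolding \<sigma>'_def by (rule permutes_compose[OF idx_translation_Ns_permutes \<sigma>])
  have "inv_into UNIV (idx_translation Ms \<gamma>) (\<sigma>' j) = \<sigma> j" if "j < N" for j
    using conj[OF that, symmetric] permutes_inverses(2)[OF idx_translation_Ms_permutes]
    unfolding \<sigma>'_def by simp
  moreover have "\<forall>j<N. \<sigma>' j < N" using permutes_in_image[OF \<sigma>'] by simp
  ultimately show "monomial_mat N \<sigma> d = monomial_mat N (inv_into UNIV (idx_translation Ms \<gamma>))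
      (\<lambda>j. d (inv_into UNIV \<sigma>' j)) * monomial_mat N \<sigma>' (\<lambda>_. 1)"
    by (simp add: monomial_mat_eq_mult permutes_inverses(2)[OF \<sigma>'])
  have "\<forall>i<N. cmod (d (inv_into UNIV \<sigma>' i)) = 1"
    using d permutes_in_image[OF permutes_inv[OF \<sigma>']] by auto
  then show "monomial_mat N (inv_into UNIV (idx_translation Ms \<gamma>)) (\<lambda>j. d (inv_into UNIV \<sigma>' j)) \<in> DZ_mats Ms"
    unfolding DZ_mats_eq[OF pos_Ms] N_Ms[symmetric] using \<gamma> by blast
qed

lemma translated_perm_equiv_conj:
  assumes \<sigma>: "\<sigma> permutes {..<N}" and \<tau>: "\<tau> permutes {..<N}" and \<alpha>: "\<alpha> \<in> idx_set Ns"
    and eq: "\<forall>a<N. \<forall>j<N. G $$ (\<sigma> (idx_translation Ns \<alpha> a), \<tau> (idx_translation Ns \<beta> j)) = F $$ (a, j)"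
  obtains \<gamma> where "\<gamma> \<in> idx_set Ms" "\<And>j. j < N \<Longrightarrow> idx_translation Ms \<gamma> (\<sigma> j) = \<sigma> (idx_translation Ns \<alpha> j)"
proof -
  note tr = idx_translation_Ns_permutes
  define \<sigma>' where "\<sigma>' = \<sigma> \<circ> idx_translation Ns \<alpha>"
  define \<tau>' where "\<tau>' = \<tau> \<circ> idx_translation Ns \<beta>"
  have "\<sigma>' permutes {..<N}" "\<tau>' permutes {..<N}"
    unfolding \<sigma>'_def \<tau>'_def by (intro permutes_compose[OF tr] \<sigma> \<tau>)+
  moreover have "\<forall>a<N. \<forall>j<N. G $$ (\<sigma>' a, \<tau>' j) = F $$ (a, j)"
    using eq unfolding \<sigma>'_def \<tau>'_def by simp
  ultimately obtain \<gamma> where \<gamma>: "\<gamma> \<in> idx_set Ms"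
    and conj: "\<And>u. u < N \<Longrightarrow> \<sigma>' (idx_translation Ns \<alpha> u) = idx_translation Ms \<gamma> (\<sigma>' u)"
    using perm_equiv_conj_translation \<alpha> by metis
  have "idx_translation Ms \<gamma> (\<sigma> j) = \<sigma> (idx_translation Ns \<alpha> j)" if "j < N" for j
    using conj[of "inv_into UNIV (idx_translation Ns \<alpha>) j"] that
      permutes_in_image[OF permutes_inv[OF tr]] permutes_inverses(1)[OF tr]
    unfolding \<sigma>'_def by simp
  with \<gamma> show ?thesis using that by blast
qed

lemma perm_equiv_transpose:
  assumes "\<forall>a<N. \<rho> a < N" "\<forall>a<N. \<kappa> a < N" and eq: "\<forall>a<N. \<forall>j<N. G $$ (\<rho> a, \<kappa> j) = F $$ (a, j)"
  shows "\<forall>a<N. \<forall>j<N. G $$ (\<kappa> a, \<rho> j) = F $$ (a, j)"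
proof (intro allI impI)
  fix a j assume a: "a < N" and j: "j < N"
  have "G $$ (\<kappa> a, \<rho> j) = G $$ (\<rho> j, \<kappa> a)" by (rule fourier_symmetric) (use assms a j N_Ms in simp_all)
  also have "\<dots> = F $$ (j, a)" using eq a j by simp
  also have "\<dots> = F $$ (a, j)" by (rule fourier_symmetric) (use a j N_Ns in simp_all)
  finally show "G $$ (\<kappa> a, \<rho> j) = F $$ (a, j)" .
qed

text \<open>Here \<open>S = P \<cdot> S2\<close>, where \<open>P\<close> permutes by \<open>\<sigma> \<circ> t\<^sub>\<alpha>\<close> (a permutation equivalence by the normal form) and
  \<open>S2\<close> is supported on \<open>t\<^sub>\<alpha>\<^sup>-\<^sup>1\<close>.\<close>

lemma Map_P_subset_Map_S_Stab_Z: "Map_P N F G \<subseteq> pair_set_prod (Map_S N F G) (Stab_Z Ns)"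
proof (rule subrelI)
  fix S T assume ST: "(S, T) \<in> Map_P N F G"
  obtain \<sigma> d \<tau> e \<alpha> \<beta> where \<sigma>: "\<sigma> permutes {..<N}" "\<forall>i<N. cmod (d i) = 1" "S = monomial_mat N \<sigma> d"
    and \<tau>: "\<tau> permutes {..<N}" "\<forall>i<N. cmod (e i) = 1" "T = monomial_mat N \<tau> e"
    and \<alpha>\<beta>: "\<alpha> \<in> idx_set Ns" "\<beta> \<in> idx_set Ns"
    and eq: "\<forall>a<N. \<forall>j<N. G $$ (\<sigma> (idx_translation Ns \<alpha> a), \<tau> (idx_translation Ns \<beta> j)) = F $$ (a, j)"
    by (rule Map_P_normal_form[OF ST])
  define P where "P = monomial_mat N (\<sigma> \<circ> idx_translation Ns \<alpha>) (\<lambda>_. 1)"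
  define R where "R = monomial_mat N (\<tau> \<circ> idx_translation Ns \<beta>) (\<lambda>_. 1)"
  define S2 where "S2 = monomial_mat N (inv_into UNIV (idx_translation Ns \<alpha>)) d"
  define T2 where "T2 = monomial_mat N (inv_into UNIV (idx_translation Ns \<beta>)) e"
  have PR: "(P, R) \<in> Map_S N F G" unfolding P_def R_def
    by (rule perm_equiv_in_Map_S[OF permutes_compose[OF idx_translation_Ns_permutes \<sigma>(1)]
          permutes_compose[OF idx_translation_Ns_permutes \<tau>(1)]]) (use eq in simp)
  have "S = P * S2" "T = R * T2" "S2 \<in> DZ_mats Ns" "T2 \<in> DZ_mats Ns"
    unfolding P_def R_def S2_def T2_def \<sigma>(3) \<tau>(3)
    using monomial_mat_split_translation_right[OF \<sigma>(1,2) \<alpha>\<beta>(1)]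
      monomial_mat_split_translation_right[OF \<tau>(1,2) \<alpha>\<beta>(2)] by simp_all
  moreover from this have "pair_act S2 T2 F = F"
    using Map_P_mult_right_fixes[OF _ subsetD[OF Map_S_subset_Map_P PR] _ _ F_carrier] ST
      subsetD[OF DZ_mats_subset_enphased[OF pos_Ns]] N_Ns by simp
  ultimately show "(S, T) \<in> pair_set_prod (Map_S N F G) (Stab_Z Ns)"
    using PR unfolding pair_set_prod_def Stab_Z_def by blast
qed

text \<open>Now \<open>S = S1 \<cdot> P\<close>: since \<open>\<sigma> \<circ> t\<^sub>\<alpha> = t\<^sub>\<gamma> \<circ> \<sigma>\<close> for a translation \<open>t\<^sub>\<gamma>\<close> of \<open>I\<^sub>G\<close>, the factor \<open>S1\<close> is
  supported on \<open>t\<^sub>\<gamma>\<^sup>-\<^sup>1\<close>. The columns are treated alike, using that Fourier matrices are symmetric.\<close>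

lemma Map_P_subset_Stab_Z_Map_S: "Map_P N F G \<subseteq> pair_set_prod (Stab_Z Ms) (Map_S N F G)"
proof (rule subrelI)
  fix S T assume ST: "(S, T) \<in> Map_P N F G"
  obtain \<sigma> d \<tau> e \<alpha> \<beta> where \<sigma>: "\<sigma> permutes {..<N}" "\<forall>i<N. cmod (d i) = 1" "S = monomial_mat N \<sigma> d"
    and \<tau>: "\<tau> permutes {..<N}" "\<forall>i<N. cmod (e i) = 1" "T = monomial_mat N \<tau> e"
    and \<alpha>\<beta>: "\<alpha> \<in> idx_set Ns" "\<beta> \<in> idx_set Ns"
    and eq: "\<forall>a<N. \<forall>j<N. G $$ (\<sigma> (idx_translation Ns \<alpha> a), \<tau> (idx_translation Ns \<beta> j)) = F $$ (a, j)"
    by (rule Map_P_normal_form[OF ST])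
  have "\<forall>a<N. \<forall>j<N. G $$ (\<tau> (idx_translation Ns \<beta> a), \<sigma> (idx_translation Ns \<alpha> j)) = F $$ (a, j)"
    using perm_equiv_transpose[of "\<lambda>a. \<sigma> (idx_translation Ns \<alpha> a)" "\<lambda>j. \<tau> (idx_translation Ns \<beta> j)"] eq
      idx_translation(1)[OF pos_Ns] permutes_in_image[OF \<sigma>(1)] permutes_in_image[OF \<tau>(1)] N_Ns
    by simp
  then obtain \<gamma> \<delta> where \<gamma>: "\<gamma> \<in> idx_set Ms"
      "\<And>j. j < N \<Longrightarrow> idx_translation Ms \<gamma> (\<sigma> j) = \<sigma> (idx_translation Ns \<alpha> j)"
    and \<delta>: "\<delta> \<in> idx_set Ms" "\<And>j. j < N \<Longrightarrow> idx_translation Ms \<delta> (\<tau> j) = \<tau> (idx_translation Ns \<beta> j)"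
    using translated_perm_equiv_conj[OF \<sigma>(1) \<tau>(1) \<alpha>\<beta>(1) eq]
      translated_perm_equiv_conj[OF \<tau>(1) \<sigma>(1) \<alpha>\<beta>(2)] by metis
  define \<sigma>' where "\<sigma>' = \<sigma> \<circ> idx_translation Ns \<alpha>"
  define \<tau>' where "\<tau>' = \<tau> \<circ> idx_translation Ns \<beta>"
  define P where "P = monomial_mat N \<sigma>' (\<lambda>_. 1)"
  define R where "R = monomial_mat N \<tau>' (\<lambda>_. 1)"
  define S1 where "S1 = monomial_mat N (inv_into UNIV (idx_translation Ms \<gamma>)) (\<lambda>j. d (inv_into UNIV \<sigma>' j))"
  define T1 where "T1 = monomial_mat N (inv_into UNIV (idx_translation Ms \<delta>)) (\<lambda>j. e (inv_into UNIV \<tau>' j))"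
  have PR: "(P, R) \<in> Map_S N F G" unfolding P_def R_def \<sigma>'_def \<tau>'_def
    by (rule perm_equiv_in_Map_S[OF permutes_compose[OF idx_translation_Ns_permutes \<sigma>(1)]
          permutes_compose[OF idx_translation_Ns_permutes \<tau>(1)]]) (use eq in simp)
  have "S = S1 * P" "T = T1 * R" "S1 \<in> DZ_mats Ms" "T1 \<in> DZ_mats Ms"
    unfolding P_def R_def S1_def T1_def \<sigma>(3) \<tau>(3) \<sigma>'_def \<tau>'_def
    using monomial_mat_split_translation_left[of \<sigma> d \<gamma> \<alpha>, OF \<sigma>(1,2) \<gamma>]
      monomial_mat_split_translation_left[of \<tau> e \<delta> \<beta>, OF \<tau>(1,2) \<delta>] by simp_all
  moreover from this have "pair_act S1 T1 G = G"
    using Map_P_mult_left_fixes[OF _ subsetD[OF Map_S_subset_Map_P PR] _ _ F_carrier] ST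
      subsetD[OF DZ_mats_subset_enphased[OF pos_Ms]] N_Ms by simp
  ultimately show "(S, T) \<in> pair_set_prod (Stab_Z Ms) (Map_S N F G)"
    using PR unfolding pair_set_prod_def Stab_Z_def by blast
qed

lemma Map_S_Stab_Z_subset_Map_P: "pair_set_prod (Map_S N F G) (Stab_Z Ns) \<subseteq> Map_P N F G"
proof
  fix X assume "X \<in> pair_set_prod (Map_S N F G) (Stab_Z Ns)"
  then obtain P R S T where X: "X = (P * S, R * T)"
    and PR: "(P, R) \<in> Map_S N F G" and ST: "(S, T) \<in> Stab_Z Ns"
    unfolding pair_set_prod_def by blast
  have "(P, R) \<in> Map_P N F G" using PR Map_S_subset_Map_P by blast
  moreover have "(S, T) \<in> Map_P N F F" using ST Stab_Z_subset_Map_P[OF pos_Ns] N_Ns by blast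
  ultimately show "X \<in> Map_P N F G" unfolding X by (rule Map_P_mult[OF _ _ F_carrier])
qed

lemma Stab_Z_Map_S_subset_Map_P: "pair_set_prod (Stab_Z Ms) (Map_S N F G) \<subseteq> Map_P N F G"
proof
  fix X assume "X \<in> pair_set_prod (Stab_Z Ms) (Map_S N F G)"
  then obtain P R S T where X: "X = (S * P, T * R)"
    and PR: "(P, R) \<in> Map_S N F G" and ST: "(S, T) \<in> Stab_Z Ms"
    unfolding pair_set_prod_def by blast
  have "(S, T) \<in> Map_P N G G" using ST Stab_Z_subset_Map_P[OF pos_Ms] N_Ms by blast
  moreover have "(P, R) \<in> Map_P N F G" using PR Map_S_subset_Map_P by blast
  ultimately show "X \<in> Map_P N F G" unfolding X by (rule Map_P_mult[OF _ _ F_carrier])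
qed

lemma enphased_equiv_iff_perm_equiv:
  "(\<exists>S\<in>enphased_perm_mats N. \<exists>T\<in>enphased_perm_mats N. G = pair_act S T F)
   \<longleftrightarrow> (\<exists>P\<in>perm_mats N. \<exists>R\<in>perm_mats N. G = pair_act P R F)"
proof
  assume "\<exists>S\<in>enphased_perm_mats N. \<exists>T\<in>enphased_perm_mats N. G = pair_act S T F"
  then obtain S T where "(S, T) \<in> Map_P N F G" unfolding Map_P_def by auto
  then obtain P R where "(P, R) \<in> Map_S N F G"
    using Map_P_subset_Map_S_Stab_Z unfolding pair_set_prod_def by blast
  then have "P \<in> perm_mats N" "R \<in> perm_mats N" "G = pair_act P R F" unfolding Map_S_def by auto
  then show "\<exists>P\<in>perm_mats N. \<exists>R\<in>perm_mats N. G = pair_act P R F" by blast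
next
  assume "\<exists>P\<in>perm_mats N. \<exists>R\<in>perm_mats N. G = pair_act P R F"
  then show "\<exists>S\<in>enphased_perm_mats N. \<exists>T\<in>enphased_perm_mats N. G = pair_act S T F"
    using perm_mats_subset_enphased by blast
qed

lemma perm_mat_equiv_iff_iso:
  "(\<exists>P\<in>perm_mats N. \<exists>R\<in>perm_mats N. G = pair_act P R F) \<longleftrightarrow> idx_group Ns \<cong> idx_group Ms"
proof -
  have act: "G = pair_act (monomial_mat N \<sigma> (\<lambda>_. 1)) (monomial_mat N \<tau> (\<lambda>_. 1)) F \<longleftrightarrow>
        (\<forall>a<N. \<forall>j<N. G $$ (\<sigma> a, \<tau> j) = F $$ (a, j))"
    if "\<sigma> permutes {..<N}" "\<tau> permutes {..<N}" for \<sigma> \<tau>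
    using pair_act_monomial_iff[OF that _ F_carrier G_carrier, of "\<lambda>_. 1" "\<lambda>_. 1"] by auto
  have "(\<exists>P\<in>perm_mats N. \<exists>R\<in>perm_mats N. G = pair_act P R F) \<longleftrightarrow>
      (\<exists>\<sigma> \<tau>. \<sigma> permutes {..<N} \<and> \<tau> permutes {..<N} \<and> (\<forall>a<N. \<forall>j<N. G $$ (\<sigma> a, \<tau> j) = F $$ (a, j)))"
  proof
    assume "\<exists>P\<in>perm_mats N. \<exists>R\<in>perm_mats N. G = pair_act P R F"
    then obtain \<sigma> \<tau> where "\<sigma> permutes {..<N}" "\<tau> permutes {..<N}"
      "G = pair_act (monomial_mat N \<sigma> (\<lambda>_. 1)) (monomial_mat N \<tau> (\<lambda>_. 1)) F"
      unfolding Bex_def perm_mats_iff by blast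
    then show "\<exists>\<sigma> \<tau>. \<sigma> permutes {..<N} \<and> \<tau> permutes {..<N} \<and> (\<forall>a<N. \<forall>j<N. G $$ (\<sigma> a, \<tau> j) = F $$ (a, j))"
      using act by blast
  next
    assume "\<exists>\<sigma> \<tau>. \<sigma> permutes {..<N} \<and> \<tau> permutes {..<N} \<and> (\<forall>a<N. \<forall>j<N. G $$ (\<sigma> a, \<tau> j) = F $$ (a, j))"
    then obtain \<sigma> \<tau> where "\<sigma> permutes {..<N}" "\<tau> permutes {..<N}"
      "\<forall>a<N. \<forall>j<N. G $$ (\<sigma> a, \<tau> j) = F $$ (a, j)" by blast
    then show "\<exists>P\<in>perm_mats N. \<exists>R\<in>perm_mats N. G = pair_act P R F"
      unfolding Bex_def perm_mats_iff using act by blast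
  qed
  then show ?thesis using perm_equiv_iff_iso by simp
qed

end

theorem lemma4p22:
  fixes Ns Ms :: "nat list" and N :: nat
  assumes "\<forall>n\<in>set Ns. n \<ge> 1" and "\<forall>n\<in>set Ms. n \<ge> 1"
    and "N = prod_list Ns" and "N = prod_list Ms"
  shows "((\<exists>S\<in>enphased_perm_mats N. \<exists>T\<in>enphased_perm_mats N. fourier Ms = pair_act S T (fourier Ns))
            \<longleftrightarrow> (\<exists>P\<in>perm_mats N. \<exists>R\<in>perm_mats N. fourier Ms = pair_act P R (fourier Ns)))
       \<and> ((\<exists>P\<in>perm_mats N. \<exists>R\<in>perm_mats N. fourier Ms = pair_act P R (fourier Ns))
            \<longleftrightarrow> idx_group Ns \<cong> idx_group Ms)
       \<and> ((\<exists>S\<in>enphased_perm_mats N. \<exists>T\<in>enphased_perm_mats N. fourier Ms = pair_act S T (fourier Ns))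
       \<longrightarrow> Map_P N (fourier Ns) (fourier Ms) = pair_set_prod (Map_S N (fourier Ns) (fourier Ms)) (Stab_Z Ns)
         \<and> Map_P N (fourier Ns) (fourier Ms) = pair_set_prod (Stab_Z Ms) (Map_S N (fourier Ns) (fourier Ms)))"
proof -
  interpret fourier_pair Ns Ms N
    using assms unfolding fourier_pair_def pos_moduli_def by blast
  \<comment> \<open>Part (b) holds even without the equivalence hypothesis: otherwise both sides are empty.\<close>
  have "Map_P N F G = pair_set_prod (Map_S N F G) (Stab_Z Ns)"
    by (rule subset_antisym[OF Map_P_subset_Map_S_Stab_Z Map_S_Stab_Z_subset_Map_P])
  moreover have "Map_P N F G = pair_set_prod (Stab_Z Ms) (Map_S N F G)"
    by (rule subset_antisym[OF Map_P_subset_Stab_Z_Map_S Stab_Z_Map_S_subset_Map_P])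
  ultimately show ?thesis
    using enphased_equiv_iff_perm_equiv perm_mat_equiv_iff_iso by simp
qed

end
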